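(* Suppose that $E$ is a realizable matrix of rank $1$: $$ E=\begin{bmatrix} J_{k_1,k_2} & -J_{k_1,k_2} & 0\\ -J_{k_1,k_2} & J_{k_1,k_2} & 0\\ 0 & 0 & 0 \end{bmatrix} $$ for some $k_1, k_2>0$. Let $A=\begin{bmatrix} 0 & J_{k_1,k_2} & X_1\\ J_{k_1,k_2} & 0 & X_2\\ X_3 & X_4 & Y \end{bmatrix}$ be a $(0,1)$ matrix compatible with the partition of $E$. Then, we have the following: \begin{enumerate} \item $A$ and $A+E$ are Gram mates if and only if $\mathbf{1}^TX_1=\mathbf{1}^TX_2$ and $X_3\mathbf{1}=X_4\mathbf{1}$. \item $E$ is realizable. \item For any Gram mates via $E$, they are convertible to each other. \item For any Gram mates via $E$, their Gram singular value is $\sqrt{k_1k_2}$, and the corresponding left and right singular vectors are (up to sign) $\frac{1}{\sqrt{2k_1}}\begin{bmatrix} -\mathbf{1}_{k_1}\\\mathbf{1}_{k_1}\\0\end{bmatrix}$ and $\frac{1}{\sqrt{2k_2}}\begin{bmatrix} \mathbf{1}_{k_2}\\-\mathbf{1}_{k_2}\\0\end{bmatrix}$, respectively. \end{enumerate}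
   Context: $J_{p,q}$ denotes the $p\times q$ all-ones matrix and $\mathbf{1}_n$ the all-ones column vector of length $n$. Two $(0,1)$ matrices $A\neq B$ are Gram mates if $AA^T=BB^T$ and $A^TA=B^TB$. A $(0,1,-1)$ matrix $E$ with $E\mathbf{1}=0$, $\mathbf{1}^TE=0^T$ is realizable if there is a pair of Gram mates $A$, $A+E$; $A$ and $B$ are Gram mates via $E$ if they are Gram mates and $A-B=\pm E$. A $(0,1)$ matrix $A$ is convertible to a $(0,1)$ matrix $B$ if $B$ is obtained from a singular value decomposition $A=U\Sigma V^T$ by changing the signs of some $k\geq1$ positive singular values; these singular values are the Gram singular values of $A$ and $B$. *)

theory Defs
  imports Complex_Main "Jordan_Normal_Form.Matrix"
begin

definition zero_one_mat :: "real mat \<Rightarrow> bool" where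
  "zero_one_mat A \<longleftrightarrow> (\<forall>i<dim_row A. \<forall>j<dim_col A. A $$ (i,j) = 0 \<or> A $$ (i,j) = 1)"

definition zero_one_neg_mat :: "real mat \<Rightarrow> bool" where
  "zero_one_neg_mat E \<longleftrightarrow>
     (\<forall>i<dim_row E. \<forall>j<dim_col E. E $$ (i,j) = 0 \<or> E $$ (i,j) = 1 \<or> E $$ (i,j) = -1)"

definition gram_mates :: "real mat \<Rightarrow> real mat \<Rightarrow> bool" where
  "gram_mates A B \<longleftrightarrow>
     A \<in> carrier_mat (dim_row B) (dim_col B) \<and>
     zero_one_mat A \<and> zero_one_mat B \<and> A \<noteq> B \<and>
     A * transpose_mat A = B * transpose_mat B \<and>
     transpose_mat A * A = transpose_mat B * B"

definition realizable :: "real mat \<Rightarrow> bool" where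
  "realizable E \<longleftrightarrow>
     zero_one_neg_mat E \<and>
     (\<forall>i<dim_row E. (\<Sum>j<dim_col E. E $$ (i,j)) = 0) \<and>
     (\<forall>j<dim_col E. (\<Sum>i<dim_row E. E $$ (i,j)) = 0) \<and>
     (\<exists>A. A \<in> carrier_mat (dim_row E) (dim_col E) \<and> gram_mates A (A + E))"

definition gram_mates_via :: "real mat \<Rightarrow> real mat \<Rightarrow> real mat \<Rightarrow> bool" where
  "gram_mates_via E A B \<longleftrightarrow> gram_mates A B \<and> (A - B = E \<or> A - B = - E)"

definition orthogonal_mat :: "nat \<Rightarrow> real mat \<Rightarrow> bool" where
  "orthogonal_mat n U \<longleftrightarrow> U \<in> carrier_mat n n \<and> transpose_mat U * U = 1\<^sub>m n"

definition is_svd :: "real mat \<Rightarrow> real mat \<Rightarrow> real mat \<Rightarrow> real mat \<Rightarrow> bool" where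
  "is_svd A U S V \<longleftrightarrow>
     orthogonal_mat (dim_row A) U \<and> orthogonal_mat (dim_col A) V \<and>
     S \<in> carrier_mat (dim_row A) (dim_col A) \<and>
     (\<forall>i<dim_row A. \<forall>j<dim_col A. i \<noteq> j \<longrightarrow> S $$ (i,j) = 0) \<and>
     (\<forall>i<min (dim_row A) (dim_col A). S $$ (i,i) \<ge> 0) \<and>
     A = U * S * transpose_mat V"

definition flip_signs :: "nat set \<Rightarrow> real mat \<Rightarrow> real mat" where
  "flip_signs K S = mat (dim_row S) (dim_col S)
     (\<lambda>(i,j). if i = j \<and> i \<in> K then - S $$ (i,j) else S $$ (i,j))"

text \<open>Conversion data: B is obtained from the SVD A = U \<Sigma> V^T by changing the
  signs of the positive singular values indexed by the nonempty set K
  (these are the Gram singular values).\<close>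
definition conversion :: "real mat \<Rightarrow> real mat \<Rightarrow> real mat \<Rightarrow> real mat \<Rightarrow> real mat \<Rightarrow> nat set \<Rightarrow> bool" where
  "conversion A B U S V K \<longleftrightarrow>
     zero_one_mat A \<and> zero_one_mat B \<and>
     is_svd A U S V \<and> K \<noteq> {} \<and> K \<subseteq> {..<min (dim_row A) (dim_col A)} \<and>
     (\<forall>i\<in>K. S $$ (i,i) > 0) \<and>
     B = U * flip_signs K S * transpose_mat V"

definition convertible :: "real mat \<Rightarrow> real mat \<Rightarrow> bool" where
  "convertible A B \<longleftrightarrow> (\<exists>U S V K. conversion A B U S V K)"

text \<open>Rows are partitioned as k1 + k1 + p, columns as k2 + k2 + q.
  Block index 0, 1 or 2 of a row / column.\<close>
definition blk :: "nat \<Rightarrow> nat \<Rightarrow> nat" where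
  "blk k i = (if i < k then 0 else if i < 2 * k then 1 else 2)"

definition E_mat :: "nat \<Rightarrow> nat \<Rightarrow> nat \<Rightarrow> nat \<Rightarrow> real mat" where
  "E_mat k1 k2 p q = mat (2 * k1 + p) (2 * k2 + q)
     (\<lambda>(i,j). if blk k1 i = 2 \<or> blk k2 j = 2 then 0
              else if blk k1 i = blk k2 j then 1 else -1)"

text \<open>A = [0 J X1; J 0 X2; X3 X4 Y] is compatible with the partition.\<close>
definition compatible_form :: "nat \<Rightarrow> nat \<Rightarrow> real mat \<Rightarrow> bool" where
  "compatible_form k1 k2 A \<longleftrightarrow>
     (\<forall>i<dim_row A. \<forall>j<dim_col A. blk k1 i < 2 \<and> blk k2 j < 2 \<longrightarrow>
        A $$ (i,j) = (if blk k1 i = blk k2 j then 0 else 1))"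

text \<open>1^T X1 = 1^T X2 and X3 1 = X4 1.\<close>
definition sum_condition :: "nat \<Rightarrow> nat \<Rightarrow> real mat \<Rightarrow> bool" where
  "sum_condition k1 k2 A \<longleftrightarrow>
     (\<forall>j<dim_col A. blk k2 j = 2 \<longrightarrow>
        (\<Sum>i<k1. A $$ (i,j)) = (\<Sum>i\<in>{k1..<2*k1}. A $$ (i,j))) \<and>
     (\<forall>i<dim_row A. blk k1 i = 2 \<longrightarrow>
        (\<Sum>j<k2. A $$ (i,j)) = (\<Sum>j\<in>{k2..<2*k2}. A $$ (i,j)))"

definition left_vec :: "nat \<Rightarrow> nat \<Rightarrow> real vec" where
  "left_vec k1 p = vec (2 * k1 + p)
     (\<lambda>i. if blk k1 i = 0 then - 1 / sqrt (2 * real k1)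
          else if blk k1 i = 1 then 1 / sqrt (2 * real k1) else 0)"

definition right_vec :: "nat \<Rightarrow> nat \<Rightarrow> real vec" where
  "right_vec k2 q = vec (2 * k2 + q)
     (\<lambda>j. if blk k2 j = 0 then 1 / sqrt (2 * real k2)
          else if blk k2 j = 1 then - 1 / sqrt (2 * real k2) else 0)"

end

theory Submission
  imports Defs "Jordan_Normal_Form.Char_Poly"
begin

text \<open>
  E = w z^T for the block sign vectors w = (1, -1, 0) and z = (1, -1, 0), so Gram mates via E
  differ by a rank-one matrix w' z^T with w' = +w or -w. If B = A - w' z^T, then A A^T = B B^T
  says that the cross terms (A z) w'^T + w' (A z)^T equal (z \<bullet> z) w' w'^T, i.e.
  A z = (z \<bullet> z / 2) w'; dually A^T A = B^T B means A^T w' = (w' \<bullet> w' / 2) z. For A of the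
  given block form these two identities are exactly the row and column sum conditions on X1, ..., X4.

  The same identities say that s = |w'| |z| / 2 = sqrt (k1 k2) is a singular value of A with
  singular vectors u = w' / |w'| and v = z / |z|. An SVD of A with this singular triple in first
  position (built from Householder reflections by induction on the size) converts A into
  A - 2 s u v^T = B. Conversely, for any conversion, U^T (A - B) V is the diagonal matrix with
  entries 2 S(k, k) for k in K and at the same time the rank-one matrix (U^T w') (V^T z)^T, so K is
  a singleton and the corresponding columns of U and V are +u or -u and +v or -v.
\<close>

section \<open>Vectors and orthogonal matrices\<close>

lemma inner_self_eq_1_dim_pos:
  "(u :: 'a :: {semiring_0, zero_neq_one} vec) \<in> carrier_vec n \<Longrightarrow> u \<bullet> u = 1 \<Longrightarrow> 0 < n"
  by (cases n) (auto simp: scalar_prod_def)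

lemma real_vec_inner_self_pos_iff:
  "(v :: real vec) \<in> carrier_vec n \<Longrightarrow> 0 < v \<bullet> v \<longleftrightarrow> v \<noteq> 0\<^sub>v n"
  using conjugate_square_greater_0_vec[of v n] by simp

lemma inner_minus_smult_expand:
  fixes x x' y :: "'a :: comm_ring vec"
  assumes "x \<in> carrier_vec n" "x' \<in> carrier_vec n" "y \<in> carrier_vec n"
  shows "(x - a \<cdot>\<^sub>v y) \<bullet> (x' - b \<cdot>\<^sub>v y) = x \<bullet> x' - b * (x \<bullet> y) - a * (y \<bullet> x') + a * b * (y \<bullet> y)"
proof -
  have "(x - a \<cdot>\<^sub>v y) \<bullet> (x' - b \<cdot>\<^sub>v y) = x \<bullet> (x' - b \<cdot>\<^sub>v y) - (a \<cdot>\<^sub>v y) \<bullet> (x' - b \<cdot>\<^sub>v y)"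
    using assms by (intro minus_scalar_prod_distrib) auto
  also have "\<dots> = (x \<bullet> x' - b * (x \<bullet> y)) - (a * (y \<bullet> x') - a * b * (y \<bullet> y))"
    using assms by (simp add: scalar_prod_minus_distrib[of _ n] mult_ac)
  finally show ?thesis by (simp add: algebra_simps)
qed

lemma uminus_smult_vec: "- (c \<cdot>\<^sub>v v) = (- c) \<cdot>\<^sub>v (v :: 'a :: ring vec)"
  by (intro eq_vecI) auto

lemma index_mult_mat_vec_sum:
  "i < dim_row A \<Longrightarrow> dim_vec v = dim_col A \<Longrightarrow> (A *\<^sub>v v) $ i = (\<Sum>j<dim_col A. A $$ (i, j) * v $ j)"
  by (simp add: scalar_prod_def lessThan_atLeast0)

lemma mult_mat_vec_unit_vec:
  fixes A :: "'a :: semiring_1 mat"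
  shows "A \<in> carrier_mat n m \<Longrightarrow> i < m \<Longrightarrow> A *\<^sub>v unit_vec m i = col A i"
  by (intro eq_vecI) auto

lemma index_transpose_mult_mult:
  assumes "P \<in> carrier_mat n n'" "A \<in> carrier_mat n m" "Q \<in> carrier_mat m m'" "i < n'" "j < m'"
  shows "(transpose_mat P * A * Q) $$ (i, j) = col P i \<bullet> (A *\<^sub>v col Q j)"
proof -
  have "transpose_mat P * A * Q = transpose_mat P * (A * Q)"
    using assms by (intro assoc_mult_mat) auto
  then show ?thesis using assms by (simp add: mult_mat_vec_def)
qed

lemma orthogonal_mat_carrier: "orthogonal_mat n U \<Longrightarrow> U \<in> carrier_mat n n"
  unfolding orthogonal_mat_def by simp

lemma orthogonal_mat_mult_transpose:
  "orthogonal_mat n U \<Longrightarrow> U * transpose_mat U = 1\<^sub>m n"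
  using mat_mult_left_right_inverse[of "transpose_mat U" n U]
  unfolding orthogonal_mat_def by auto

lemma orthogonal_mat_mult:
  assumes "orthogonal_mat n P" "orthogonal_mat n Q"
  shows "orthogonal_mat n (P * Q)"
proof -
  have P: "P \<in> carrier_mat n n" and Q: "Q \<in> carrier_mat n n"
    and PP: "transpose_mat P * P = 1\<^sub>m n" and QQ: "transpose_mat Q * Q = 1\<^sub>m n"
    using assms unfolding orthogonal_mat_def by auto
  have "transpose_mat (P * Q) * (P * Q) = transpose_mat Q * (transpose_mat P * P) * Q"
    using P Q by (simp add: transpose_mult assoc_mult_mat[of _ n n _ n _ n])
  also have "\<dots> = 1\<^sub>m n" using PP QQ Q by simp
  finally show ?thesis using P Q unfolding orthogonal_mat_def by auto
qed

lemma orthogonal_mat_col_inner: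
  assumes U: "orthogonal_mat n U" and "i < n" "j < n"
  shows "col U i \<bullet> col U j = (if i = j then 1 else 0)"
proof -
  have "(transpose_mat U * U) $$ (i, j) = (if i = j then 1 else 0)"
    using assms unfolding orthogonal_mat_def by simp
  then show ?thesis
    using assms orthogonal_mat_carrier[OF U] by simp
qed

lemma orthogonal_mat_mult_transpose_vec:
  assumes U: "orthogonal_mat n U" and x: "x \<in> carrier_vec n"
  shows "U *\<^sub>v (transpose_mat U *\<^sub>v x) = x"
proof -
  have "U *\<^sub>v (transpose_mat U *\<^sub>v x) = (U * transpose_mat U) *\<^sub>v x"
    using orthogonal_mat_carrier[OF U] x by simp
  then show ?thesis using orthogonal_mat_mult_transpose[OF U] x by simp
qed

lemma orthogonal_mat_inner_preserving:
  assumes U: "orthogonal_mat n U" and x: "x \<in> carrier_vec n"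
  shows "(U *\<^sub>v x) \<bullet> (U *\<^sub>v x) = x \<bullet> x"
proof -
  have Uc: "U \<in> carrier_mat n n" by (rule orthogonal_mat_carrier[OF U])
  have "(U *\<^sub>v x) \<bullet> (U *\<^sub>v x) = (transpose_mat U *\<^sub>v (U *\<^sub>v x)) \<bullet> x"
    using transpose_vec_mult_scalar[OF Uc x, of "U *\<^sub>v x"] Uc x by simp
  also have "transpose_mat U *\<^sub>v (U *\<^sub>v x) = (transpose_mat U * U) *\<^sub>v x"
    using Uc x by simp
  finally show ?thesis using U x unfolding orthogonal_mat_def by simp
qed

lemma orthogonal_mat_col_of_coords:
  fixes w :: "real vec"
  assumes U: "orthogonal_mat n U" and w: "w \<in> carrier_vec n" and i: "i < n"
    and coords: "transpose_mat U *\<^sub>v w = c \<cdot>\<^sub>v unit_vec n i" and c: "c \<noteq> 0"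
  shows "\<bar>c\<bar> = sqrt (w \<bullet> w)"
    and "col U i = (1 / sqrt (w \<bullet> w)) \<cdot>\<^sub>v w \<or> col U i = (- 1 / sqrt (w \<bullet> w)) \<cdot>\<^sub>v w"
proof -
  have Uc: "U \<in> carrier_mat n n" using U by (rule orthogonal_mat_carrier)
  have "w = U *\<^sub>v (c \<cdot>\<^sub>v unit_vec n i)"
    using orthogonal_mat_mult_transpose_vec[OF U w] coords by simp
  then have w_col: "w = c \<cdot>\<^sub>v col U i"
    using Uc i by (simp add: mult_mat_vec mult_mat_vec_unit_vec)
  then have "w \<bullet> w = c * c"
    using Uc i orthogonal_mat_col_inner[OF U i i] by simp
  then show abs_c: "\<bar>c\<bar> = sqrt (w \<bullet> w)"
    by (simp add: real_sqrt_abs2)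
  have col_U: "col U i = (1 / c) \<cdot>\<^sub>v w"
    using w_col c Uc i by (simp add: smult_smult_assoc)
  show "col U i = (1 / sqrt (w \<bullet> w)) \<cdot>\<^sub>v w \<or> col U i = (- 1 / sqrt (w \<bullet> w)) \<cdot>\<^sub>v w"
  proof (cases "0 < c")
    case True
    then have "sqrt (w \<bullet> w) = c" using abs_c by simp
    then show ?thesis using col_U by simp
  next
    case False
    then have "sqrt (w \<bullet> w) = - c" using abs_c by simp
    then show ?thesis using col_U by simp
  qed
qed

definition householder_mat :: "real vec \<Rightarrow> real mat" where
  "householder_mat y = mat (dim_vec y) (dim_vec y)
     (\<lambda>(i, j). (if i = j then 1 else 0) - 2 / (y \<bullet> y) * (y $ i * y $ j))"

lemma col_householder_mat:
  "i < dim_vec y \<Longrightarrow> col (householder_mat y) i = unit_vec (dim_vec y) i - (2 / (y \<bullet> y) * y $ i) \<cdot>\<^sub>v y"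
  by (intro eq_vecI) (auto simp: householder_mat_def mult.commute)

lemma orthogonal_mat_householder_mat:
  assumes y: "y \<in> carrier_vec n" "y \<noteq> 0\<^sub>v n"
  shows "orthogonal_mat n (householder_mat y)"
proof -
  define H c where "H = householder_mat y" and "c = y \<bullet> y"
  have H: "H \<in> carrier_mat n n" unfolding H_def householder_mat_def using y by simp
  have c: "0 < c" unfolding c_def using real_vec_inner_self_pos_iff[OF y(1)] y(2) by simp
  have "transpose_mat H * H = 1\<^sub>m n"
  proof (rule eq_matI)
    fix i j assume "i < dim_row (1\<^sub>m n)" "j < dim_col (1\<^sub>m n)"
    then have ij: "i < n" "j < n" by auto
    have "(transpose_mat H * H) $$ (i, j) = col H i \<bullet> col H j"
      using H ij by simp
    also have "\<dots> = (if i = j then 1 else 0) - (4 / c - (2 / c) * (2 / c) * c) * (y $ i * y $ j)"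
      unfolding H_def using ij y col_householder_mat[of _ y]
      by (simp add: inner_minus_smult_expand[OF _ _ y(1)] c_def[symmetric] algebra_simps)
    also have "\<dots> = 1\<^sub>m n $$ (i, j)" using ij c by simp
    finally show "(transpose_mat H * H) $$ (i, j) = 1\<^sub>m n $$ (i, j)" .
  qed (use H in auto)
  then show ?thesis using H unfolding orthogonal_mat_def H_def by blast
qed

lemma orthogonal_mat_with_first_col:
  fixes u :: "real vec"
  assumes u: "u \<in> carrier_vec n" and unit: "u \<bullet> u = 1"
  shows "\<exists>H. orthogonal_mat n H \<and> col H 0 = u"
proof (cases "u = unit_vec n 0")
  case True
  then show ?thesis
    using inner_self_eq_1_dim_pos[OF u unit] by (intro exI[of _ "1\<^sub>m n"]) (auto simp: orthogonal_mat_def)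
next
  case False
  have n: "0 < n" using inner_self_eq_1_dim_pos[OF u unit] .
  \<comment> \<open>The reflection in the hyperplane orthogonal to e_0 - u swaps e_0 and u.\<close>
  define y where "y = unit_vec n 0 - u"
  have y: "y \<in> carrier_vec n" using u unfolding y_def by simp
  have "y \<noteq> 0\<^sub>v n"
  proof
    assume "y = 0\<^sub>v n"
    then have "u $ i = unit_vec n 0 $ i" if "i < n" for i
      using that u unfolding y_def vec_eq_iff by auto
    then have "u = unit_vec n 0" using u by (intro eq_vecI) auto
    with False show False ..
  qed
  moreover have "col (householder_mat y) 0 = u"
  proof -
    have "y \<bullet> y = 2 * y $ 0"
      using inner_minus_smult_expand[OF _ _ u, of "unit_vec n 0" "unit_vec n 0" 1 1] n u unit
      unfolding y_def by simp
    moreover have "0 < y \<bullet> y" using real_vec_inner_self_pos_iff[OF y] \<open>y \<noteq> 0\<^sub>v n\<close> by simp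
    ultimately have "2 / (y \<bullet> y) * y $ 0 = 1" by simp
    then have "col (householder_mat y) 0 = unit_vec n 0 - y"
      using col_householder_mat[of 0 y] n y by simp
    then show ?thesis using u unfolding y_def by (intro eq_vecI) auto
  qed
  ultimately show ?thesis using orthogonal_mat_householder_mat[OF y] by blast
qed

section \<open>Existence of singular value decompositions\<close>

definition diag_ext :: "'a :: zero \<Rightarrow> 'a mat \<Rightarrow> 'a mat" where
  "diag_ext a X = four_block_mat (mat 1 1 (\<lambda>_. a)) (0\<^sub>m 1 (dim_col X)) (0\<^sub>m (dim_row X) 1) X"

lemma diag_ext_carrier[simp]:
  "X \<in> carrier_mat r c \<Longrightarrow> diag_ext a X \<in> carrier_mat (Suc r) (Suc c)"
  unfolding diag_ext_def using four_block_carrier_mat[of "mat 1 1 (\<lambda>_. a)" 1 1 X r c] by simp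

lemma dim_diag_ext[simp]:
  "dim_row (diag_ext a X) = Suc (dim_row X)" "dim_col (diag_ext a X) = Suc (dim_col X)"
  unfolding diag_ext_def by simp_all

lemma index_diag_ext:
  "i < Suc (dim_row X) \<Longrightarrow> j < Suc (dim_col X) \<Longrightarrow> diag_ext a X $$ (i, j) =
    (if i = 0 \<and> j = 0 then a else if i = 0 \<or> j = 0 then 0 else X $$ (i - 1, j - 1))"
  unfolding diag_ext_def by auto

lemma diag_ext_mult:
  fixes X Y :: "'a :: comm_ring_1 mat"
  assumes "X \<in> carrier_mat r n" "Y \<in> carrier_mat n c"
  shows "diag_ext a X * diag_ext b Y = diag_ext (a * b) (X * Y)"
proof -
  have "mat 1 1 (\<lambda>_. a) * mat 1 1 (\<lambda>_. b) = mat 1 1 (\<lambda>_. a * b)"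
    by (rule eq_matI) (auto simp: scalar_prod_def)
  then show ?thesis
    using assms unfolding diag_ext_def
    by (subst mult_four_block_mat[of _ 1 1 _ n _ r _ _ 1 _ c]) auto
qed

lemma transpose_diag_ext: "transpose_mat (diag_ext a X) = diag_ext a (transpose_mat X)"
  unfolding diag_ext_def
  by (subst transpose_four_block_mat[of _ 1 1 _ "dim_col X" _ "dim_row X"]) (auto intro!: eq_matI)

lemma diag_ext_one: "diag_ext (1 :: 'a :: {zero, one}) (1\<^sub>m n) = 1\<^sub>m (Suc n)"
proof -
  have "mat 1 1 (\<lambda>_. 1 :: 'a) = 1\<^sub>m 1" by (rule eq_matI) auto
  then show ?thesis unfolding diag_ext_def using four_block_one_mat[of 1 n] by simp
qed

lemma orthogonal_mat_diag_ext:
  assumes "orthogonal_mat n W"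
  shows "orthogonal_mat (Suc n) (diag_ext 1 W)"
proof -
  have W: "W \<in> carrier_mat n n" "transpose_mat W * W = 1\<^sub>m n"
    using assms unfolding orthogonal_mat_def by auto
  then have "transpose_mat (diag_ext 1 W) * diag_ext 1 W = 1\<^sub>m (Suc n)"
    by (simp add: transpose_diag_ext diag_ext_mult[of _ n n] diag_ext_one)
  then show ?thesis using W unfolding orthogonal_mat_def by simp
qed

lemma col_diag_ext_0:
  fixes X :: "'a :: zero_neq_one mat"
  shows "X \<in> carrier_mat r c \<Longrightarrow> col (diag_ext 1 X) 0 = unit_vec (Suc r) 0"
  by (intro eq_vecI) (auto simp: index_diag_ext)

definition singular_triple :: "real mat \<Rightarrow> real \<Rightarrow> real vec \<Rightarrow> real vec \<Rightarrow> bool" where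
  "singular_triple A s u v \<longleftrightarrow>
     u \<in> carrier_vec (dim_row A) \<and> v \<in> carrier_vec (dim_col A) \<and> u \<bullet> u = 1 \<and> v \<bullet> v = 1 \<and>
     A *\<^sub>v v = s \<cdot>\<^sub>v u \<and> transpose_mat A *\<^sub>v u = s \<cdot>\<^sub>v v"

lemma is_svd_orthogonal_change:
  assumes A: "A \<in> carrier_mat n m" and P: "orthogonal_mat n P" and Q: "orthogonal_mat m Q"
    and svd: "is_svd (transpose_mat P * A * Q) U S V"
  shows "is_svd A (P * U) S (Q * V)"
proof -
  have Pc: "P \<in> carrier_mat n n" and Qc: "Q \<in> carrier_mat m m"
    using P Q by (simp_all add: orthogonal_mat_carrier)
  have U: "orthogonal_mat n U" and V: "orthogonal_mat m V" and Sc: "S \<in> carrier_mat n m"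
    and C: "transpose_mat P * A * Q = U * S * transpose_mat V"
    using svd Pc Qc A unfolding is_svd_def by auto
  have Uc: "U \<in> carrier_mat n n" and Vc: "V \<in> carrier_mat m m"
    using U V by (simp_all add: orthogonal_mat_carrier)
  have "P * U * S * transpose_mat (Q * V) = P * (U * S * transpose_mat V) * transpose_mat Q"
    using Pc Qc Uc Vc Sc
    by (simp add: transpose_mult[of _ m m _ m] assoc_mult_mat[of _ n n _ n _ m]
        assoc_mult_mat[of _ n n _ m _ m] assoc_mult_mat[of _ n m _ m _ m])
  also have "\<dots> = (P * transpose_mat P) * A * (Q * transpose_mat Q)"
    unfolding C[symmetric] using Pc Qc A
    by (simp add: assoc_mult_mat[of _ n n _ n _ m] assoc_mult_mat[of _ n m _ m _ m]
        assoc_mult_mat[of _ n n _ m _ m])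
  also have "\<dots> = A"
    using A by (simp add: orthogonal_mat_mult_transpose[OF P] orthogonal_mat_mult_transpose[OF Q])
  finally have "A = P * U * S * transpose_mat (Q * V)" ..
  moreover have "orthogonal_mat n (P * U)" "orthogonal_mat m (Q * V)"
    using P Q U V by (simp_all add: orthogonal_mat_mult)
  ultimately show ?thesis using svd A Pc Qc unfolding is_svd_def by auto
qed

lemma is_svd_diag_ext:
  assumes svd: "is_svd C U S V" and s: "0 \<le> s"
  shows "is_svd (diag_ext s C) (diag_ext 1 U) (diag_ext s S) (diag_ext 1 V)"
proof -
  define r c where "r = dim_row C" and "c = dim_col C"
  have U: "orthogonal_mat r U" and V: "orthogonal_mat c V" and S: "S \<in> carrier_mat r c"
    and diag: "\<forall>i<r. \<forall>j<c. i \<noteq> j \<longrightarrow> S $$ (i, j) = 0"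
    and nonneg: "\<forall>i<min r c. 0 \<le> S $$ (i, i)" and C: "C = U * S * transpose_mat V"
    using svd unfolding is_svd_def r_def c_def by auto
  have Uc: "U \<in> carrier_mat r r" and Vc: "V \<in> carrier_mat c c"
    using U V by (simp_all add: orthogonal_mat_carrier)
  have "diag_ext 1 U * diag_ext s S * transpose_mat (diag_ext 1 V) = diag_ext s C"
    using Uc Vc S unfolding C
    by (simp add: transpose_diag_ext diag_ext_mult[of _ r r] diag_ext_mult[of _ r c])
  moreover have "\<forall>i<Suc r. \<forall>j<Suc c. i \<noteq> j \<longrightarrow> diag_ext s S $$ (i, j) = 0"
    using S diag by (auto simp: index_diag_ext)
  moreover have "\<forall>i<min (Suc r) (Suc c). 0 \<le> diag_ext s S $$ (i, i)"
  proof (intro allI impI)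
    fix i assume "i < min (Suc r) (Suc c)"
    then show "0 \<le> diag_ext s S $$ (i, i)"
      using S s nonneg[rule_format, of "i - 1"] by (cases i) (auto simp: index_diag_ext)
  qed
  ultimately show ?thesis
    using orthogonal_mat_diag_ext[OF U] orthogonal_mat_diag_ext[OF V] S
    unfolding is_svd_def r_def c_def by auto
qed

lemma singular_triple_block_form:
  assumes A: "A \<in> carrier_mat n m" and triple: "singular_triple A s u v"
    and P: "orthogonal_mat n P" "col P 0 = u" and Q: "orthogonal_mat m Q" "col Q 0 = v"
  defines "C \<equiv> transpose_mat P * A * Q"
  shows "C = diag_ext s (mat (n - 1) (m - 1) (\<lambda>(i, j). C $$ (Suc i, Suc j)))"
proof -
  have u: "u \<in> carrier_vec n" "u \<bullet> u = 1" and v: "v \<in> carrier_vec m" "v \<bullet> v = 1"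
    and Av: "A *\<^sub>v v = s \<cdot>\<^sub>v u" and Atu: "transpose_mat A *\<^sub>v u = s \<cdot>\<^sub>v v"
    using triple A unfolding singular_triple_def by auto
  have n: "0 < n" and m: "0 < m"
    using inner_self_eq_1_dim_pos[OF u] inner_self_eq_1_dim_pos[OF v] .
  have Pc: "P \<in> carrier_mat n n" and Qc: "Q \<in> carrier_mat m m"
    using P Q by (simp_all add: orthogonal_mat_carrier)
  have C_entry: "C $$ (i, j) = col P i \<bullet> (A *\<^sub>v col Q j)" if "i < n" "j < m" for i j
    unfolding C_def using index_transpose_mult_mult[OF Pc A Qc that] .
  have first_row: "C $$ (0, j) = (if j = 0 then s else 0)" if "j < m" for j
  proof -
    have "C $$ (0, j) = (transpose_mat A *\<^sub>v u) \<bullet> col Q j"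
      using C_entry[OF n that] P(2) transpose_vec_mult_scalar[OF A _ u(1)] Qc that by simp
    also have "\<dots> = s * (col Q 0 \<bullet> col Q j)"
      using Atu Q(2) v Qc that by simp
    finally show ?thesis
      using orthogonal_mat_col_inner[OF Q(1) m that] by simp
  qed
  have first_col: "C $$ (i, 0) = (if i = 0 then s else 0)" if "i < n" for i
  proof -
    have "C $$ (i, 0) = s * (col P i \<bullet> col P 0)"
      using C_entry[OF that m] Q(2) Av P(2) u Pc that by simp
    then show ?thesis
      using orthogonal_mat_col_inner[OF P(1) that n] by simp
  qed
  have C: "C \<in> carrier_mat n m" unfolding C_def using Pc A Qc by auto
  show ?thesis
  proof (rule eq_matI)
    fix i j assume "i < dim_row (diag_ext s (mat (n - 1) (m - 1) (\<lambda>(i, j). C $$ (Suc i, Suc j))))"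
      and "j < dim_col (diag_ext s (mat (n - 1) (m - 1) (\<lambda>(i, j). C $$ (Suc i, Suc j))))"
    then have ij: "i < n" "j < m" using n m by auto
    show "C $$ (i, j) = diag_ext s (mat (n - 1) (m - 1) (\<lambda>(i, j). C $$ (Suc i, Suc j))) $$ (i, j)"
      using ij first_row first_col by (cases i; cases j) (auto simp: index_diag_ext)
  qed (use C n m in auto)
qed

lemma svd_extend_singular_triple:
  assumes A: "A \<in> carrier_mat n m" and triple: "singular_triple A s u v" and s: "0 \<le> s"
    and svd_minor: "\<And>C. C \<in> carrier_mat (n - 1) (m - 1) \<Longrightarrow> \<exists>U S V. is_svd C U S V"
  shows "\<exists>U S V. is_svd A U S V \<and> col U 0 = u \<and> col V 0 = v \<and> S $$ (0, 0) = s"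
proof -
  have u: "u \<in> carrier_vec n" "u \<bullet> u = 1" and v: "v \<in> carrier_vec m" "v \<bullet> v = 1"
    using triple A unfolding singular_triple_def by auto
  obtain P where P: "orthogonal_mat n P" "col P 0 = u"
    using orthogonal_mat_with_first_col[OF u] by blast
  obtain Q where Q: "orthogonal_mat m Q" "col Q 0 = v"
    using orthogonal_mat_with_first_col[OF v] by blast
  define C where "C = transpose_mat P * A * Q"
  define C' where "C' = mat (n - 1) (m - 1) (\<lambda>(i, j). C $$ (Suc i, Suc j))"
  have block: "C = diag_ext s C'"
    unfolding C_def C'_def by (rule singular_triple_block_form[OF A triple P Q])
  obtain U S V where "is_svd C' U S V"
    using svd_minor[of C'] unfolding C'_def by auto
  then have "is_svd C (diag_ext 1 U) (diag_ext s S) (diag_ext 1 V)"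
    unfolding block using is_svd_diag_ext s by blast
  then have svd: "is_svd A (P * diag_ext 1 U) (diag_ext s S) (Q * diag_ext 1 V)"
    unfolding C_def by (rule is_svd_orthogonal_change[OF A P(1) Q(1)])
  have n: "n = Suc (n - 1)" and m: "m = Suc (m - 1)"
    using inner_self_eq_1_dim_pos[OF u] inner_self_eq_1_dim_pos[OF v] by simp_all
  have Uc: "U \<in> carrier_mat (n - 1) (n - 1)" and Vc: "V \<in> carrier_mat (m - 1) (m - 1)"
    using \<open>is_svd C' U S V\<close> orthogonal_mat_carrier unfolding is_svd_def C'_def by auto
  have "col (P * diag_ext 1 U) 0 = u"
    using P Uc n orthogonal_mat_carrier[OF P(1)] col_diag_ext_0[OF Uc]
    by (subst col_mult2[of _ n n]) (auto simp: mult_mat_vec_unit_vec)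
  moreover have "col (Q * diag_ext 1 V) 0 = v"
    using Q Vc m orthogonal_mat_carrier[OF Q(1)] col_diag_ext_0[OF Vc]
    by (subst col_mult2[of _ m m]) (auto simp: mult_mat_vec_unit_vec)
  moreover have "diag_ext s S $$ (0, 0) = s"
    unfolding diag_ext_def by simp
  ultimately show ?thesis using svd by blast
qed

lemma real_symmetric_mat_eigenvalue_real:
  fixes M :: "real mat"
  assumes M: "M \<in> carrier_mat n n" and sym: "transpose_mat M = M"
    and z: "z \<in> carrier_vec n" "z \<noteq> 0\<^sub>v n" and ev: "map_mat complex_of_real M *\<^sub>v z = a \<cdot>\<^sub>v z"
  shows "Im a = 0"
proof -
  have ev_i: "(\<Sum>j<n. of_real (M $$ (i, j)) * z $ j) = a * z $ i" if "i < n" for i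
    using arg_cong[OF ev, of "\<lambda>v. v $ i"] that M z
    by (subst (asm) index_mult_mat_vec_sum) auto
  have M_sym: "M $$ (i, j) = M $$ (j, i)" if "i < n" "j < n" for i j
    using arg_cong[OF sym, of "\<lambda>X. X $$ (j, i)"] that M by simp
  \<comment> \<open>q = z^* M z equals a |z|^2 and, M being real symmetric, is its own conjugate.\<close>
  define q where "q = (\<Sum>i<n. cnj (z $ i) * (\<Sum>j<n. of_real (M $$ (i, j)) * z $ j))"
  define r where "r = (\<Sum>i<n. (cmod (z $ i))\<^sup>2)"
  have q: "q = a * of_real r"
  proof -
    have "q = a * (\<Sum>i<n. z $ i * cnj (z $ i))"
      unfolding q_def using ev_i by (auto simp: sum_distrib_left mult_ac intro!: sum.cong)
    also have "(\<Sum>i<n. z $ i * cnj (z $ i)) = of_real r"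
      unfolding r_def of_real_sum by (simp only: complex_norm_square)
    finally show ?thesis .
  qed
  have "cnj q = (\<Sum>i<n. \<Sum>j<n. z $ i * of_real (M $$ (i, j)) * cnj (z $ j))"
    unfolding q_def by (simp add: cnj_sum sum_distrib_left mult_ac)
  also have "\<dots> = (\<Sum>j<n. \<Sum>i<n. z $ i * of_real (M $$ (i, j)) * cnj (z $ j))"
    by (rule sum.swap)
  also have "\<dots> = q"
    unfolding q_def using M_sym by (auto simp: sum_distrib_left mult_ac intro!: sum.cong)
  finally have "Im q = 0" by (metis Reals_cnj_iff complex_is_Real_iff)
  moreover have "0 < r"
  proof -
    obtain i where i: "i < n" "z $ i \<noteq> 0"
      using z by (auto simp: vec_eq_iff)
    have "(cmod (z $ i))\<^sup>2 \<le> r" unfolding r_def using i by (intro member_le_sum) auto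
    moreover have "0 < (cmod (z $ i))\<^sup>2" using i by simp
    ultimately show ?thesis by linarith
  qed
  ultimately show ?thesis using q by simp
qed

lemma real_symmetric_mat_eigenvector:
  fixes M :: "real mat"
  assumes M: "M \<in> carrier_mat n n" and n: "0 < n" and sym: "transpose_mat M = M"
  shows "\<exists>x lam. x \<in> carrier_vec n \<and> x \<noteq> 0\<^sub>v n \<and> M *\<^sub>v x = lam \<cdot>\<^sub>v x"
proof -
  define Mc where "Mc = map_mat complex_of_real M"
  have Mc: "Mc \<in> carrier_mat n n" unfolding Mc_def using M by simp
  obtain as where as: "char_poly Mc = (\<Prod>a\<leftarrow>as. [:- a, 1:])" "length as = n"
    using char_poly_factorized[OF Mc] by blast
  then obtain a where "poly (char_poly Mc) a = 0"
    using n by (cases as) (auto simp: poly_prod_list)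
  then have "eigenvalue Mc a" using eigenvalue_root_char_poly[OF Mc] by simp
  then obtain z where z: "z \<in> carrier_vec n" "z \<noteq> 0\<^sub>v n" and ev: "Mc *\<^sub>v z = a \<cdot>\<^sub>v z"
    unfolding eigenvalue_def eigenvector_def using Mc by auto
  have real: "Im a = 0"
    using real_symmetric_mat_eigenvalue_real[OF M sym z] ev unfolding Mc_def .
  have ev_i: "(\<Sum>j<n. of_real (M $$ (i, j)) * z $ j) = a * z $ i" if "i < n" for i
    using arg_cong[OF ev, of "\<lambda>v. v $ i"] that M z
    by (subst (asm) index_mult_mat_vec_sum) (auto simp: Mc_def)
  have "(M *\<^sub>v map_vec f z) $ i = Re a * f (z $ i)"
    if f: "f = Re \<or> f = Im" and i: "i < n" for f i
  proof -
    have "(M *\<^sub>v map_vec f z) $ i = f (\<Sum>j<n. of_real (M $$ (i, j)) * z $ j)"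
      using M z i f by (subst index_mult_mat_vec_sum) (auto simp: Re_sum Im_sum)
    then show ?thesis using ev_i[OF i] real f by auto
  qed
  then have "M *\<^sub>v map_vec Re z = Re a \<cdot>\<^sub>v map_vec Re z" "M *\<^sub>v map_vec Im z = Re a \<cdot>\<^sub>v map_vec Im z"
    using M z by (auto intro!: eq_vecI)
  moreover have "map_vec Re z \<noteq> 0\<^sub>v n \<or> map_vec Im z \<noteq> 0\<^sub>v n"
    using z by (auto simp: vec_eq_iff complex_eq_iff)
  ultimately show ?thesis using z(1) by (metis map_carrier_vec)
qed

lemma singular_triple_of_eigenvector:
  assumes A: "A \<in> carrier_mat n m" and x: "x \<in> carrier_vec m" and Ax: "A *\<^sub>v x \<noteq> 0\<^sub>v n"
    and ev: "transpose_mat A *\<^sub>v (A *\<^sub>v x) = lam \<cdot>\<^sub>v x"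
  shows "\<exists>s u v. 0 < s \<and> singular_triple A s u v"
proof -
  have Ax_c: "A *\<^sub>v x \<in> carrier_vec n" using A x by simp
  have "x \<noteq> 0\<^sub>v m" using Ax A by auto
  then have xx: "0 < x \<bullet> x" using real_vec_inner_self_pos_iff[OF x] by simp
  have "lam * (x \<bullet> x) = (A *\<^sub>v x) \<bullet> (A *\<^sub>v x)"
    using transpose_vec_mult_scalar[OF A x Ax_c] ev x by simp
  moreover have "0 < (A *\<^sub>v x) \<bullet> (A *\<^sub>v x)"
    using real_vec_inner_self_pos_iff[OF Ax_c] Ax by simp
  ultimately have AxAx: "(A *\<^sub>v x) \<bullet> (A *\<^sub>v x) = lam * (x \<bullet> x)" and "0 < lam * (x \<bullet> x)"
    by simp_all
  then have lam: "0 < lam" using xx by (simp add: zero_less_mult_iff)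
  define s where "s = sqrt lam"
  define N where "N = sqrt (x \<bullet> x)"
  have s: "0 < s" "s * s = lam" and N: "0 < N" "N * N = x \<bullet> x"
    using lam xx unfolding s_def N_def by auto
  define v where "v = (1 / N) \<cdot>\<^sub>v x"
  define u where "u = (1 / (s * N)) \<cdot>\<^sub>v (A *\<^sub>v x)"
  have "v \<bullet> v = (x \<bullet> x) / (N * N)" unfolding v_def using x by simp
  then have "v \<bullet> v = 1" using N xx by simp
  moreover have "u \<bullet> u = (lam * (x \<bullet> x)) / ((s * s) * (N * N))"
    unfolding u_def using Ax_c AxAx by (simp add: mult_ac)
  then have "u \<bullet> u = 1" using s N xx lam by simp
  moreover have "A *\<^sub>v v = s \<cdot>\<^sub>v u"
    unfolding u_def v_def using A x s N by (simp add: mult_mat_vec smult_smult_assoc)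
  moreover have "transpose_mat A *\<^sub>v u = s \<cdot>\<^sub>v v"
  proof -
    have "lam / (N * s) = s / N" using s N by (simp add: field_simps)
    then show ?thesis
      unfolding u_def v_def using A x ev by (simp add: mult_mat_vec[of _ m n] smult_smult_assoc mult_ac)
  qed
  moreover have "u \<in> carrier_vec n" "v \<in> carrier_vec m"
    unfolding u_def v_def using A x by simp_all
  ultimately have "singular_triple A s u v"
    using A unfolding singular_triple_def by simp
  then show ?thesis using s by blast
qed

lemma singular_triple_mult_orthogonal:
  assumes A: "A \<in> carrier_mat n m" and Q: "orthogonal_mat m Q"
    and triple: "singular_triple (A * Q) s u w"
  shows "singular_triple A s u (Q *\<^sub>v w)"
proof -
  have Qc: "Q \<in> carrier_mat m m" using Q by (rule orthogonal_mat_carrier)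
  have u: "u \<in> carrier_vec n" and w: "w \<in> carrier_vec m" and units: "u \<bullet> u = 1" "w \<bullet> w = 1"
    and AQw: "(A * Q) *\<^sub>v w = s \<cdot>\<^sub>v u" and AQtu: "transpose_mat (A * Q) *\<^sub>v u = s \<cdot>\<^sub>v w"
    using triple A Qc unfolding singular_triple_def by auto
  have "A *\<^sub>v (Q *\<^sub>v w) = s \<cdot>\<^sub>v u"
    using AQw A Qc w by simp
  moreover have "transpose_mat A *\<^sub>v u = s \<cdot>\<^sub>v (Q *\<^sub>v w)"
  proof -
    have "transpose_mat Q *\<^sub>v (transpose_mat A *\<^sub>v u) = s \<cdot>\<^sub>v w"
      using AQtu A Qc u by (simp add: transpose_mult[of A n m Q m])
    then have "Q *\<^sub>v (transpose_mat Q *\<^sub>v (transpose_mat A *\<^sub>v u)) = s \<cdot>\<^sub>v (Q *\<^sub>v w)"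
      using Qc w by (simp add: mult_mat_vec)
    then show ?thesis
      using orthogonal_mat_mult_transpose_vec[OF Q, of "transpose_mat A *\<^sub>v u"] A u by simp
  qed
  ultimately show ?thesis
    using A Qc u w units orthogonal_mat_inner_preserving[OF Q w]
    unfolding singular_triple_def by simp
qed

lemma singular_triple_drop_zero_col:
  assumes B: "B \<in> carrier_mat n (Suc m)" and B0: "col B 0 = 0\<^sub>v n"
    and triple: "singular_triple (mat n m (\<lambda>(i, j). B $$ (i, Suc j))) s u w"
  shows "singular_triple B s u (vCons 0 w)"
proof -
  define B' where "B' = mat n m (\<lambda>(i, j). B $$ (i, Suc j))"
  have u: "u \<in> carrier_vec n" and w: "w \<in> carrier_vec m" and units: "u \<bullet> u = 1" "w \<bullet> w = 1"
    and Bw: "B' *\<^sub>v w = s \<cdot>\<^sub>v u" and Btu: "transpose_mat B' *\<^sub>v u = s \<cdot>\<^sub>v w"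
    using triple unfolding singular_triple_def B'_def by auto
  have B_i0: "B $$ (i, 0) = 0" if "i < n" for i
    using arg_cong[OF B0, of "\<lambda>v. v $ i"] B that by simp
  have row_B: "row B i = vCons 0 (row B' i)" if "i < n" for i
    using B B_i0 that by (intro eq_vecI) (auto simp: B'_def vec_index_vCons)
  have "B *\<^sub>v vCons 0 w = s \<cdot>\<^sub>v u"
  proof (rule eq_vecI)
    fix i assume "i < dim_vec (s \<cdot>\<^sub>v u)"
    then have i: "i < n" using u by simp
    have "(B *\<^sub>v vCons 0 w) $ i = (B' *\<^sub>v w) $ i"
      using B i row_B[OF i] by (simp add: B'_def)
    then show "(B *\<^sub>v vCons 0 w) $ i = (s \<cdot>\<^sub>v u) $ i" using Bw by simp
  qed (use B u in simp)
  moreover have "transpose_mat B *\<^sub>v u = s \<cdot>\<^sub>v vCons 0 w"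
  proof (rule eq_vecI)
    fix j assume "j < dim_vec (s \<cdot>\<^sub>v vCons 0 w)"
    then have j: "j < Suc m" using w by simp
    show "(transpose_mat B *\<^sub>v u) $ j = (s \<cdot>\<^sub>v vCons 0 w) $ j"
    proof (cases j)
      case 0
      then show ?thesis using B B0 u by simp
    next
      case (Suc j')
      have "col B j = col B' j'" using B j Suc by (intro eq_vecI) (auto simp: B'_def)
      then have "(transpose_mat B *\<^sub>v u) $ j = (transpose_mat B' *\<^sub>v u) $ j'"
        using B j Suc by (simp add: B'_def)
      then show ?thesis using Btu j Suc w by simp
    qed
  qed (use B w in simp)
  ultimately show ?thesis
    using B u w units unfolding singular_triple_def by simp
qed

lemma singular_triple_of_kernel_vector:
  fixes A :: "real mat"
  assumes A: "A \<in> carrier_mat n (Suc m)" and A0: "A \<noteq> 0\<^sub>m n (Suc m)"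
    and v: "v \<in> carrier_vec (Suc m)" "v \<bullet> v = 1" and Av: "A *\<^sub>v v = 0\<^sub>v n"
    and minor: "\<And>B. B \<in> carrier_mat n m \<Longrightarrow> B \<noteq> 0\<^sub>m n m \<Longrightarrow> \<exists>s u w. 0 < s \<and> singular_triple B s u w"
  shows "\<exists>s u v. 0 < s \<and> singular_triple A s u v"
proof -
  obtain Q where Q: "orthogonal_mat (Suc m) Q" "col Q 0 = v"
    using orthogonal_mat_with_first_col[OF v] by blast
  have Qc: "Q \<in> carrier_mat (Suc m) (Suc m)" using Q(1) by (rule orthogonal_mat_carrier)
  \<comment> \<open>Q maps e_0 to v, so A Q has a zero first column and the rest of A Q is a smaller matrix.\<close>
  define B where "B = A * Q"
  have B: "B \<in> carrier_mat n (Suc m)" unfolding B_def using A Qc by simp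
  have "col B 0 = A *\<^sub>v col Q 0" unfolding B_def using A Qc by (intro col_mult2) auto
  then have B0: "col B 0 = 0\<^sub>v n" using Q(2) Av by simp
  define B' where "B' = mat n m (\<lambda>(i, j). B $$ (i, Suc j))"
  have "B' \<noteq> 0\<^sub>m n m"
  proof
    assume B'0: "B' = 0\<^sub>m n m"
    have "B = 0\<^sub>m n (Suc m)"
    proof (rule eq_matI)
      fix i j assume "i < dim_row (0\<^sub>m n (Suc m))" "j < dim_col (0\<^sub>m n (Suc m))"
      then have ij: "i < n" "j < Suc m" by auto
      show "B $$ (i, j) = 0\<^sub>m n (Suc m) $$ (i, j)"
      proof (cases j)
        case 0
        then show ?thesis using arg_cong[OF B0, of "\<lambda>v. v $ i"] B ij by simp
      next
        case (Suc j')
        then show ?thesis using arg_cong[OF B'0, of "\<lambda>X. X $$ (i, j')"] ij by (simp add: B'_def)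
      qed
    qed (use B in auto)
    then have "A * (Q * transpose_mat Q) = 0\<^sub>m n (Suc m)"
      using A Qc unfolding B_def by (subst assoc_mult_mat[symmetric, of _ n "Suc m" _ "Suc m"]) auto
    then show False using A A0 by (simp add: orthogonal_mat_mult_transpose[OF Q(1)])
  qed
  then obtain s u w where "0 < s" and "singular_triple B' s u w"
    using minor[of B'] unfolding B'_def by auto
  then have "singular_triple B s u (vCons 0 w)"
    unfolding B'_def using singular_triple_drop_zero_col[OF B B0] by blast
  then have "singular_triple A s u (Q *\<^sub>v vCons 0 w)"
    unfolding B_def using singular_triple_mult_orthogonal[OF A Q(1)] by blast
  then show ?thesis using \<open>0 < s\<close> by blast
qed

lemma singular_triple_exists:
  fixes A :: "real mat"
  assumes "A \<in> carrier_mat n m" and "A \<noteq> 0\<^sub>m n m"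
  shows "\<exists>s u v. 0 < s \<and> singular_triple A s u v"
  using assms
proof (induction m arbitrary: A)
  case 0
  then show ?case by (auto intro: eq_matI)
next
  case (Suc m)
  have A: "A \<in> carrier_mat n (Suc m)" by (rule Suc.prems(1))
  have M: "transpose_mat A * A \<in> carrier_mat (Suc m) (Suc m)" using A by simp
  have "transpose_mat (transpose_mat A * A) = transpose_mat A * A"
    using A by (simp add: transpose_mult[of _ "Suc m" n])
  then obtain x lam where x: "x \<in> carrier_vec (Suc m)" "x \<noteq> 0\<^sub>v (Suc m)"
    and ev: "(transpose_mat A * A) *\<^sub>v x = lam \<cdot>\<^sub>v x"
    using real_symmetric_mat_eigenvector[OF M] by blast
  show ?case
  proof (cases "A *\<^sub>v x = 0\<^sub>v n")
    case False
    then show ?thesis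
      using singular_triple_of_eigenvector[OF A x(1) False] ev A x by simp
  next
    case True
    define v where "v = (1 / sqrt (x \<bullet> x)) \<cdot>\<^sub>v x"
    have "0 < x \<bullet> x" using real_vec_inner_self_pos_iff[OF x(1)] x(2) by simp
    then have "v \<bullet> v = 1" unfolding v_def using x by simp
    moreover have "A *\<^sub>v v = 0\<^sub>v n" unfolding v_def using A x True by (simp add: mult_mat_vec vec_eq_iff)
    ultimately show ?thesis
      using singular_triple_of_kernel_vector[OF A Suc.prems(2), of v] Suc.IH x(1)
      unfolding v_def by simp
  qed
qed

lemma svd_exists:
  fixes A :: "real mat"
  assumes "A \<in> carrier_mat n m"
  shows "\<exists>U S V. is_svd A U S V"
  using assms
proof (induction m arbitrary: n A)
  case 0
  then have "is_svd A (1\<^sub>m n) (0\<^sub>m n 0) (1\<^sub>m 0)"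
    unfolding is_svd_def orthogonal_mat_def by (auto intro: eq_matI)
  then show ?case by blast
next
  case (Suc m)
  show ?case
  proof (cases "A = 0\<^sub>m n (Suc m)")
    case True
    then have "is_svd A (1\<^sub>m n) (0\<^sub>m n (Suc m)) (1\<^sub>m (Suc m))"
      unfolding is_svd_def orthogonal_mat_def by auto
    then show ?thesis by blast
  next
    case False
    then obtain s u v where "0 < s" "singular_triple A s u v"
      using singular_triple_exists[OF Suc.prems] by blast
    then show ?thesis
      using svd_extend_singular_triple[OF Suc.prems] Suc.IH by fastforce
  qed
qed

lemma svd_with_singular_triple:
  fixes A :: "real mat"
  assumes "A \<in> carrier_mat n m" and "singular_triple A s u v" and "0 \<le> s"
  shows "\<exists>U S V. is_svd A U S V \<and> col U 0 = u \<and> col V 0 = v \<and> S $$ (0, 0) = s"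
  using svd_extend_singular_triple[OF assms] svd_exists by blast

section \<open>Gram mates with a rank-one difference\<close>

definition outer_prod_mat :: "'a :: times vec \<Rightarrow> 'a vec \<Rightarrow> 'a mat" where
  "outer_prod_mat w z = mat (dim_vec w) (dim_vec z) (\<lambda>(i, j). w $ i * z $ j)"

lemma outer_prod_mat_carrier[simp]:
  "w \<in> carrier_vec n \<Longrightarrow> z \<in> carrier_vec m \<Longrightarrow> outer_prod_mat w z \<in> carrier_mat n m"
  unfolding outer_prod_mat_def by auto

lemma dim_outer_prod_mat[simp]:
  "dim_row (outer_prod_mat w z) = dim_vec w" "dim_col (outer_prod_mat w z) = dim_vec z"
  unfolding outer_prod_mat_def by simp_all

lemma index_outer_prod_mat[simp]:
  "i < dim_vec w \<Longrightarrow> j < dim_vec z \<Longrightarrow> outer_prod_mat w z $$ (i, j) = w $ i * z $ j"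
  unfolding outer_prod_mat_def by simp

lemma transpose_outer_prod_mat:
  "transpose_mat (outer_prod_mat w z) = outer_prod_mat z (w :: 'a :: comm_semiring vec)"
  by (intro eq_matI) (auto simp: mult.commute)

lemma mult_outer_prod_mat:
  fixes A :: "'a :: comm_semiring_0 mat"
  assumes "A \<in> carrier_mat n (dim_vec w)"
  shows "A * outer_prod_mat w z = outer_prod_mat (A *\<^sub>v w) z"
  using assms by (intro eq_matI) (auto simp: scalar_prod_def sum_distrib_left sum_distrib_right mult_ac)

lemma outer_prod_mat_mult:
  fixes B :: "'a :: comm_semiring_0 mat"
  assumes "B \<in> carrier_mat (dim_vec z) m"
  shows "outer_prod_mat w z * B = outer_prod_mat w (transpose_mat B *\<^sub>v z)"
  using assms by (intro eq_matI) (auto simp: scalar_prod_def sum_distrib_left mult_ac)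

lemma symmetrized_outer_eq_iff:
  fixes a w :: "nat \<Rightarrow> real"
  assumes i0: "i0 < n" and w_i0: "w i0 \<noteq> 0"
  shows "(\<forall>i<n. \<forall>j<n. w j * a i + w i * a j = w i * w j * c) \<longleftrightarrow> (\<forall>i<n. a i = w i * c / 2)"
proof
  assume H: "\<forall>i<n. \<forall>j<n. w j * a i + w i * a j = w i * w j * c"
  have a_i0: "a i0 = w i0 * c / 2"
    using H[rule_format, OF i0 i0] w_i0 by (simp add: field_simps)
  show "\<forall>i<n. a i = w i * c / 2"
  proof (intro allI impI)
    fix i assume "i < n"
    then have "w i0 * a i + w i * (w i0 * c / 2) = w i * w i0 * c"
      using H[rule_format, OF _ i0, of i] a_i0 by simp
    then have "w i0 * a i = w i0 * (w i * c / 2)" by (simp add: field_simps)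
    then show "a i = w i * c / 2" using w_i0 by simp
  qed
next
  assume H: "\<forall>i<n. a i = w i * c / 2"
  show "\<forall>i<n. \<forall>j<n. w j * a i + w i * a j = w i * w j * c"
  proof (intro allI impI)
    fix i j assume "i < n" "j < n"
    have "w j * a i + w i * a j = w j * (w i * c / 2) + w i * (w j * c / 2)"
      using H \<open>i < n\<close> \<open>j < n\<close> by presburger
    also have "\<dots> = w i * w j * c" by (simp add: field_simps)
    finally show "w j * a i + w i * a j = w i * w j * c" .
  qed
qed

lemma gram_rank_one_update_iff:
  fixes A :: "real mat"
  assumes A: "A \<in> carrier_mat n m" and w: "w \<in> carrier_vec n" "w \<noteq> 0\<^sub>v n" and z: "z \<in> carrier_vec m"
  shows "(A - outer_prod_mat w z) * transpose_mat (A - outer_prod_mat w z) = A * transpose_mat A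
    \<longleftrightarrow> A *\<^sub>v z = ((z \<bullet> z) / 2) \<cdot>\<^sub>v w"
proof -
  define D where "D = A - outer_prod_mat w z"
  have D: "D \<in> carrier_mat n m" unfolding D_def using w z by (intro minus_carrier_mat) simp
  have row_D: "row D i = row A i - w $ i \<cdot>\<^sub>v z" if "i < n" for i
    unfolding D_def using A w z that by (intro eq_vecI) auto
  have entry: "(D * transpose_mat D) $$ (i, j) = (A * transpose_mat A) $$ (i, j)
      - w $ j * (A *\<^sub>v z) $ i - w $ i * (A *\<^sub>v z) $ j + w $ i * w $ j * (z \<bullet> z)"
    if ij: "i < n" "j < n" for i j
  proof -
    have "(D * transpose_mat D) $$ (i, j) = (row A i - w $ i \<cdot>\<^sub>v z) \<bullet> (row A j - w $ j \<cdot>\<^sub>v z)"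
      using D ij row_D by simp
    also have "\<dots> = row A i \<bullet> row A j - w $ j * (row A i \<bullet> z) - w $ i * (z \<bullet> row A j)
        + w $ i * w $ j * (z \<bullet> z)"
      using A z ij by (intro inner_minus_smult_expand[of _ m]) auto
    also have "z \<bullet> row A j = row A j \<bullet> z"
      using A z ij by (intro comm_scalar_prod[of _ m]) auto
    finally show ?thesis using A ij by simp
  qed
  obtain i0 where i0: "i0 < n" "w $ i0 \<noteq> 0" using w by (auto simp: vec_eq_iff)
  have "D * transpose_mat D = A * transpose_mat A \<longleftrightarrow>
      (\<forall>i<n. \<forall>j<n. (D * transpose_mat D) $$ (i, j) = (A * transpose_mat A) $$ (i, j))"
    using A D by (auto simp: mat_eq_iff)
  also have "\<dots> \<longleftrightarrow>
      (\<forall>i<n. \<forall>j<n. w $ j * (A *\<^sub>v z) $ i + w $ i * (A *\<^sub>v z) $ j = w $ i * w $ j * (z \<bullet> z))"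
  proof (intro all_cong imp_cong refl)
    fix i j assume "i < n" "j < n"
    from entry[OF this] show "(D * transpose_mat D) $$ (i, j) = (A * transpose_mat A) $$ (i, j) \<longleftrightarrow>
      w $ j * (A *\<^sub>v z) $ i + w $ i * (A *\<^sub>v z) $ j = w $ i * w $ j * (z \<bullet> z)"
      by (intro iffI) linarith+
  qed
  also have "\<dots> \<longleftrightarrow> (\<forall>i<n. (A *\<^sub>v z) $ i = w $ i * (z \<bullet> z) / 2)"
    using symmetrized_outer_eq_iff[where w = "\<lambda>i. w $ i" and a = "\<lambda>i. (A *\<^sub>v z) $ i", OF i0] .
  also have "\<dots> \<longleftrightarrow> A *\<^sub>v z = ((z \<bullet> z) / 2) \<cdot>\<^sub>v w"
    using A w by (auto simp: vec_eq_iff)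
  finally show ?thesis unfolding D_def .
qed

lemma gram_transpose_rank_one_update_iff:
  fixes A :: "real mat"
  assumes A: "A \<in> carrier_mat n m" and w: "w \<in> carrier_vec n" and z: "z \<in> carrier_vec m" "z \<noteq> 0\<^sub>v m"
  shows "transpose_mat (A - outer_prod_mat w z) * (A - outer_prod_mat w z) = transpose_mat A * A
    \<longleftrightarrow> transpose_mat A *\<^sub>v w = ((w \<bullet> w) / 2) \<cdot>\<^sub>v z"
proof -
  have T: "transpose_mat (A - outer_prod_mat w z) = transpose_mat A - outer_prod_mat z w"
    using A w z by (simp add: transpose_minus[of _ n m] transpose_outer_prod_mat)
  then have "transpose_mat (transpose_mat A - outer_prod_mat z w) = A - outer_prod_mat w z"
    by (metis transpose_transpose)
  then show ?thesis using T
    using gram_rank_one_update_iff[of "transpose_mat A" m n z w] A w z by simp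
qed

lemma gram_mates_sym: "gram_mates A B \<Longrightarrow> gram_mates B A"
  unfolding gram_mates_def by auto

lemma gram_mates_via_sym:
  assumes "gram_mates_via E A B"
  shows "gram_mates_via E B A"
proof -
  have gm: "gram_mates A B" and diff: "A - B = E \<or> A - B = - E"
    using assms unfolding gram_mates_via_def by auto
  have "B - A = - (A - B)"
    using gm unfolding gram_mates_def by (intro eq_matI) auto
  then have "B - A = E \<or> B - A = - E"
    using diff by auto
  then show ?thesis using gram_mates_sym[OF gm] unfolding gram_mates_via_def by simp
qed

lemma mult_mult_transpose_minus:
  fixes U :: "'a :: comm_ring mat"
  assumes "U \<in> carrier_mat n' n" "X \<in> carrier_mat n m" "Y \<in> carrier_mat n m" "V \<in> carrier_mat m' m"
  shows "U * X * transpose_mat V - U * Y * transpose_mat V = U * (X - Y) * transpose_mat V"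
  using assms by (simp add: mult_minus_distrib_mat[of _ n' n] minus_mult_distrib_mat[of _ n' m])

lemma dim_flip_signs[simp]:
  "dim_row (flip_signs K S) = dim_row S" "dim_col (flip_signs K S) = dim_col S"
  unfolding flip_signs_def by simp_all

lemma svd_minus_flip_signs:
  assumes "is_svd A U S V"
  shows "A - U * flip_signs K S * transpose_mat V = U * (S - flip_signs K S) * transpose_mat V"
proof -
  define n m where "n = dim_row A" and "m = dim_col A"
  have U: "orthogonal_mat n U" and V: "orthogonal_mat m V" and S: "S \<in> carrier_mat n m"
    and A: "A = U * S * transpose_mat V"
    using assms unfolding is_svd_def n_def m_def by auto
  have "flip_signs K S \<in> carrier_mat n m" using S by auto
  then show ?thesis
    unfolding A
    using mult_mult_transpose_minus[OF orthogonal_mat_carrier[OF U] S _ orthogonal_mat_carrier[OF V]]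
    by simp
qed

lemma conversion_diff:
  "conversion A B U S V K \<Longrightarrow> A - B = U * (S - flip_signs K S) * transpose_mat V"
  unfolding conversion_def using svd_minus_flip_signs by blast

lemma conversion_diff_in_svd_bases:
  assumes conv: "conversion A B U S V K"
  shows "transpose_mat U * (A - B) * V = S - flip_signs K S"
proof -
  define n m where "n = dim_row A" and "m = dim_col A"
  have U: "orthogonal_mat n U" and V: "orthogonal_mat m V" and S: "S \<in> carrier_mat n m"
    using conv unfolding conversion_def is_svd_def n_def m_def by auto
  have Uc: "U \<in> carrier_mat n n" and Vc: "V \<in> carrier_mat m m"
    using U V by (simp_all add: orthogonal_mat_carrier)
  have D: "S - flip_signs K S \<in> carrier_mat n m" using S by auto
  have "transpose_mat U * (A - B) * V
      = (transpose_mat U * U) * (S - flip_signs K S) * (transpose_mat V * V)"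
    unfolding conversion_diff[OF conv] using Uc Vc D
    by (simp add: assoc_mult_mat[of _ n n _ n _ m] assoc_mult_mat[of _ n m _ m _ m]
        assoc_mult_mat[of _ n n _ m _ m])
  then show ?thesis
    using U V left_mult_one_mat[OF D] right_mult_one_mat[OF D] unfolding orthogonal_mat_def by simp
qed

lemma minus_flip_signs_single:
  assumes "S \<in> carrier_mat n m" "i < n" "i < m"
  shows "S - flip_signs {i} S = outer_prod_mat ((2 * S $$ (i, i)) \<cdot>\<^sub>v unit_vec n i) (unit_vec m i)"
  using assms by (intro eq_matI) (auto simp: flip_signs_def)

lemma eq_minus_of_minus_eq:
  fixes X Y :: "'a :: ab_group_add mat"
  assumes "X \<in> carrier_mat n m" "Y \<in> carrier_mat n m" "X - Y = Z"
  shows "Y = X - Z"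
  using assms by (intro eq_matI) auto

lemma svd_flip_signs_single:
  assumes svd: "is_svd A U S V" and A: "A \<in> carrier_mat n m" and i: "i < n" "i < m"
  shows "U * flip_signs {i} S * transpose_mat V = A - outer_prod_mat ((2 * S $$ (i, i)) \<cdot>\<^sub>v col U i) (col V i)"
proof -
  have S: "S \<in> carrier_mat n m" and U: "U \<in> carrier_mat n n" and V: "V \<in> carrier_mat m m"
    using svd A orthogonal_mat_carrier unfolding is_svd_def by auto
  have "A - U * flip_signs {i} S * transpose_mat V = U * (S - flip_signs {i} S) * transpose_mat V"
    by (rule svd_minus_flip_signs[OF svd])
  also have "\<dots> = outer_prod_mat ((2 * S $$ (i, i)) \<cdot>\<^sub>v col U i) (col V i)"
    unfolding minus_flip_signs_single[OF S i] using U V i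
    by (simp add: mult_outer_prod_mat[where n = n] outer_prod_mat_mult[where m = m] mult_mat_vec
        mult_mat_vec_unit_vec)
  finally show ?thesis
    using A U V S by (intro eq_minus_of_minus_eq[of _ n m]) auto
qed

lemma gram_mates_carrier: "gram_mates A B \<Longrightarrow> A \<in> carrier_mat n m \<Longrightarrow> B \<in> carrier_mat n m"
  unfolding gram_mates_def by (metis carrier_matD carrier_matI)

lemma gram_mates_rank_one_singular_triple:
  assumes gm: "gram_mates A B" and A: "A \<in> carrier_mat n m"
    and w: "w \<in> carrier_vec n" "w \<noteq> 0\<^sub>v n" and z: "z \<in> carrier_vec m" "z \<noteq> 0\<^sub>v m"
    and diff: "A - B = outer_prod_mat w z"
  shows "singular_triple A (sqrt (w \<bullet> w) * sqrt (z \<bullet> z) / 2)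
    ((1 / sqrt (w \<bullet> w)) \<cdot>\<^sub>v w) ((1 / sqrt (z \<bullet> z)) \<cdot>\<^sub>v z)"
proof -
  have B: "B = A - outer_prod_mat w z"
    by (rule eq_minus_of_minus_eq[OF A gram_mates_carrier[OF gm A] diff])
  have Az: "A *\<^sub>v z = ((z \<bullet> z) / 2) \<cdot>\<^sub>v w" and Atw: "transpose_mat A *\<^sub>v w = ((w \<bullet> w) / 2) \<cdot>\<^sub>v z"
    using gm gram_rank_one_update_iff[OF A w z(1)] gram_transpose_rank_one_update_iff[OF A w(1) z]
    unfolding gram_mates_def B by auto
  define a b where "a = sqrt (w \<bullet> w)" and "b = sqrt (z \<bullet> z)"
  have a: "0 < a" "a * a = w \<bullet> w" and b: "0 < b" "b * b = z \<bullet> z"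
    using real_vec_inner_self_pos_iff[OF w(1)] real_vec_inner_self_pos_iff[OF z(1)] w z
    unfolding a_def b_def by auto
  have "A *\<^sub>v ((1 / b) \<cdot>\<^sub>v z) = (a * b / 2) \<cdot>\<^sub>v ((1 / a) \<cdot>\<^sub>v w)"
    "transpose_mat A *\<^sub>v ((1 / a) \<cdot>\<^sub>v w) = (a * b / 2) \<cdot>\<^sub>v ((1 / b) \<cdot>\<^sub>v z)"
    using A w z a b Az Atw
    by (simp_all add: mult_mat_vec[of _ n m] mult_mat_vec[of _ m n] smult_smult_assoc
        a(2)[symmetric] b(2)[symmetric] field_simps)
  moreover have "((1 / a) \<cdot>\<^sub>v w) \<bullet> ((1 / a) \<cdot>\<^sub>v w) = 1" "((1 / b) \<cdot>\<^sub>v z) \<bullet> ((1 / b) \<cdot>\<^sub>v z) = 1"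
    using w z a b by (simp_all add: a(2)[symmetric] b(2)[symmetric])
  ultimately show ?thesis
    using A w z unfolding singular_triple_def a_def b_def by simp
qed

lemma gram_mates_rank_one_conversion:
  assumes gm: "gram_mates A B" and A: "A \<in> carrier_mat n m"
    and w: "w \<in> carrier_vec n" "w \<noteq> 0\<^sub>v n" and z: "z \<in> carrier_vec m" "z \<noteq> 0\<^sub>v m"
    and diff: "A - B = outer_prod_mat w z"
  shows "\<exists>U S V. conversion A B U S V {0}"
proof -
  define a b where "a = sqrt (w \<bullet> w)" and "b = sqrt (z \<bullet> z)"
  have a: "0 < a" and b: "0 < b"
    using real_vec_inner_self_pos_iff[OF w(1)] real_vec_inner_self_pos_iff[OF z(1)] w z
    unfolding a_def b_def by auto
  obtain U S V where svd: "is_svd A U S V" and U0: "col U 0 = (1 / a) \<cdot>\<^sub>v w"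
    and V0: "col V 0 = (1 / b) \<cdot>\<^sub>v z" and S0: "S $$ (0, 0) = a * b / 2"
    using svd_with_singular_triple[OF A gram_mates_rank_one_singular_triple[OF assms]] a b
    unfolding a_def b_def by fastforce
  have n: "0 < n" and m: "0 < m"
    using w z by (auto intro!: Nat.gr0I)
  have "outer_prod_mat ((2 * (a * b / 2)) \<cdot>\<^sub>v ((1 / a) \<cdot>\<^sub>v w)) ((1 / b) \<cdot>\<^sub>v z) = outer_prod_mat w z"
    using a b w z by (intro eq_matI) auto
  then have "U * flip_signs {0} S * transpose_mat V = B"
    using svd_flip_signs_single[OF svd A n m] U0 V0 S0
      eq_minus_of_minus_eq[OF A gram_mates_carrier[OF gm A] diff]
    by simp
  moreover have "0 < S $$ (0, 0)" unfolding S0 using a b by simp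
  ultimately have "conversion A B U S V {0}"
    using gm svd A n m unfolding conversion_def gram_mates_def by auto
  then show ?thesis by blast
qed

lemma outer_prod_mat_eq_diagonal:
  fixes \<alpha> \<beta> :: "real vec"
  assumes \<alpha>: "\<alpha> \<in> carrier_vec n" and \<beta>: "\<beta> \<in> carrier_vec m"
    and K: "K \<subseteq> {..<min n m}" "K \<noteq> {}"
    and eq: "\<And>k l. k < n \<Longrightarrow> l < m \<Longrightarrow> \<alpha> $ k * \<beta> $ l = (if k = l \<and> k \<in> K then d k else 0)"
    and d: "\<And>k. k \<in> K \<Longrightarrow> d k \<noteq> 0"
  shows "\<exists>i. K = {i} \<and> \<alpha> = \<alpha> $ i \<cdot>\<^sub>v unit_vec n i \<and> \<beta> = \<beta> $ i \<cdot>\<^sub>v unit_vec m i \<and> \<alpha> $ i * \<beta> $ i = d i"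
proof -
  obtain i where i: "i \<in> K" using K(2) by blast
  have i_lt: "i < n" "i < m" using i K(1) by auto
  have d_i: "\<alpha> $ i * \<beta> $ i = d i" using eq[OF i_lt] i by simp
  then have "\<alpha> $ i \<noteq> 0" "\<beta> $ i \<noteq> 0" using d[OF i] by auto
  have \<alpha>0: "\<alpha> $ k = 0" if "k < n" "k \<noteq> i" for k
    using eq[OF that(1) i_lt(2)] that \<open>\<beta> $ i \<noteq> 0\<close> by simp
  have \<beta>0: "\<beta> $ l = 0" if "l < m" "l \<noteq> i" for l
    using eq[OF i_lt(1) that(1)] that \<open>\<alpha> $ i \<noteq> 0\<close> by simp
  have "K = {i}"
  proof (intro equalityI subsetI)
    fix j assume j: "j \<in> K"
    then have "j < n" "j < m" using K(1) by auto
    then show "j \<in> {i}" using eq[of j j] d[OF j] j \<alpha>0 by fastforce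
  qed (use i in simp)
  moreover have "\<alpha> = \<alpha> $ i \<cdot>\<^sub>v unit_vec n i" using \<alpha> \<alpha>0 i_lt by (intro eq_vecI) auto
  moreover have "\<beta> = \<beta> $ i \<cdot>\<^sub>v unit_vec m i" using \<beta> \<beta>0 i_lt by (intro eq_vecI) auto
  ultimately show ?thesis using d_i by blast
qed

lemma conversion_rank_one_diff:
  assumes conv: "conversion A B U S V K" and diff: "A - B = outer_prod_mat w z"
    and w: "w \<in> carrier_vec (dim_row A)" and z: "z \<in> carrier_vec (dim_col A)"
  shows "\<exists>i. K = {i} \<and> 2 * S $$ (i, i) = sqrt (w \<bullet> w) * sqrt (z \<bullet> z) \<and>
    (col U i = (1 / sqrt (w \<bullet> w)) \<cdot>\<^sub>v w \<or> col U i = (- 1 / sqrt (w \<bullet> w)) \<cdot>\<^sub>v w) \<and>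
    (col V i = (1 / sqrt (z \<bullet> z)) \<cdot>\<^sub>v z \<or> col V i = (- 1 / sqrt (z \<bullet> z)) \<cdot>\<^sub>v z)"
proof -
  define n m where "n = dim_row A" and "m = dim_col A"
  have U: "orthogonal_mat n U" and V: "orthogonal_mat m V" and S: "S \<in> carrier_mat n m"
    and K: "K \<noteq> {}" "K \<subseteq> {..<min n m}" and K_pos: "\<And>k. k \<in> K \<Longrightarrow> 0 < S $$ (k, k)"
    using conv unfolding conversion_def is_svd_def n_def m_def by auto
  have Uc: "U \<in> carrier_mat n n" and Vc: "V \<in> carrier_mat m m"
    using U V by (simp_all add: orthogonal_mat_carrier)
  define \<alpha> \<beta> where "\<alpha> = transpose_mat U *\<^sub>v w" and "\<beta> = transpose_mat V *\<^sub>v z"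
  have "outer_prod_mat \<alpha> \<beta> = transpose_mat U * (A - B) * V"
    unfolding diff \<alpha>_def \<beta>_def using Uc Vc w z n_def m_def
    by (simp add: mult_outer_prod_mat[where n = n] outer_prod_mat_mult[where m = m])
  then have outer_D: "outer_prod_mat \<alpha> \<beta> = S - flip_signs K S"
    unfolding conversion_diff_in_svd_bases[OF conv] .
  have "\<exists>i. K = {i} \<and> \<alpha> = \<alpha> $ i \<cdot>\<^sub>v unit_vec n i \<and> \<beta> = \<beta> $ i \<cdot>\<^sub>v unit_vec m i \<and>
      \<alpha> $ i * \<beta> $ i = 2 * S $$ (i, i)"
  proof (rule outer_prod_mat_eq_diagonal[OF _ _ K(2,1)])
    fix k l assume "k < n" "l < m"
    then show "\<alpha> $ k * \<beta> $ l = (if k = l \<and> k \<in> K then 2 * S $$ (k, k) else 0)"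
      using arg_cong[OF outer_D, of "\<lambda>X. X $$ (k, l)"] Uc Vc S
      by (auto simp: \<alpha>_def \<beta>_def flip_signs_def)
  qed (use Uc Vc w z in \<open>auto simp: \<alpha>_def \<beta>_def n_def m_def dest: K_pos\<close>)
  then obtain i where Ki: "K = {i}" and \<alpha>: "transpose_mat U *\<^sub>v w = \<alpha> $ i \<cdot>\<^sub>v unit_vec n i"
    and \<beta>: "transpose_mat V *\<^sub>v z = \<beta> $ i \<cdot>\<^sub>v unit_vec m i" and S_i: "\<alpha> $ i * \<beta> $ i = 2 * S $$ (i, i)"
    unfolding \<alpha>_def \<beta>_def by auto
  have i: "i < n" "i < m" and "0 < \<alpha> $ i * \<beta> $ i" using Ki K K_pos S_i by auto
  then have "\<alpha> $ i \<noteq> 0" "\<beta> $ i \<noteq> 0" by auto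
  note U_i = orthogonal_mat_col_of_coords[OF U w[folded n_def] i(1) \<alpha> \<open>\<alpha> $ i \<noteq> 0\<close>]
  note V_i = orthogonal_mat_col_of_coords[OF V z[folded m_def] i(2) \<beta> \<open>\<beta> $ i \<noteq> 0\<close>]
  have "sqrt (w \<bullet> w) * sqrt (z \<bullet> z) = \<bar>\<alpha> $ i * \<beta> $ i\<bar>"
    using U_i(1) V_i(1) by (simp add: abs_mult)
  then have "2 * S $$ (i, i) = sqrt (w \<bullet> w) * sqrt (z \<bullet> z)"
    using S_i \<open>0 < \<alpha> $ i * \<beta> $ i\<close> by simp
  then show ?thesis using Ki U_i(2) V_i(2) by blast
qed

section \<open>The block matrix E\<close>

definition block_sign_vec :: "nat \<Rightarrow> nat \<Rightarrow> real vec" where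
  "block_sign_vec k p = vec (2 * k + p) (\<lambda>i. if blk k i = 0 then 1 else if blk k i = 1 then -1 else 0)"

lemma block_sign_vec_carrier[simp]: "block_sign_vec k p \<in> carrier_vec (2 * k + p)"
  unfolding block_sign_vec_def by simp

lemma dim_block_sign_vec[simp]: "dim_vec (block_sign_vec k p) = 2 * k + p"
  unfolding block_sign_vec_def by simp

lemma index_block_sign_vec:
  "i < 2 * k + p \<Longrightarrow> block_sign_vec k p $ i = (if i < k then 1 else if i < 2 * k then -1 else 0)"
  unfolding block_sign_vec_def blk_def by simp

lemma sum_split_blocks:
  fixes f :: "nat \<Rightarrow> real"
  shows "(\<Sum>i<2 * k + p. f i) = (\<Sum>i<k. f i) + (\<Sum>i\<in>{k..<2 * k}. f i) + (\<Sum>i\<in>{2 * k..<2 * k + p}. f i)"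
proof -
  have "(\<Sum>i<2 * k + p. f i) = (\<Sum>i\<in>{0..<k}. f i) + (\<Sum>i\<in>{k..<2 * k}. f i) + (\<Sum>i\<in>{2 * k..<2 * k + p}. f i)"
    by (simp add: lessThan_atLeast0 sum.atLeastLessThan_concat)
  then show ?thesis by (simp add: lessThan_atLeast0)
qed

lemma sum_block_sign_vec: "(\<Sum>i<2 * k + p. block_sign_vec k p $ i) = 0"
proof -
  have "(\<Sum>i\<in>{k..<2 * k}. block_sign_vec k p $ i) = (\<Sum>i\<in>{k..<2 * k}. -1)"
    by (intro sum.cong) (auto simp: index_block_sign_vec)
  moreover have "(\<Sum>i\<in>{2 * k..<2 * k + p}. block_sign_vec k p $ i) = 0"
    by (intro sum.neutral) (auto simp: index_block_sign_vec)
  ultimately show ?thesis by (simp add: sum_split_blocks index_block_sign_vec)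
qed

lemma block_sign_vec_inner_self: "block_sign_vec k p \<bullet> block_sign_vec k p = 2 * real k"
proof -
  have "block_sign_vec k p \<bullet> block_sign_vec k p = (\<Sum>i<2 * k + p. block_sign_vec k p $ i * block_sign_vec k p $ i)"
    by (simp add: scalar_prod_def lessThan_atLeast0)
  moreover have "(\<Sum>i\<in>{k..<2 * k}. block_sign_vec k p $ i * block_sign_vec k p $ i) = (\<Sum>i\<in>{k..<2 * k}. 1)"
    by (intro sum.cong) (auto simp: index_block_sign_vec)
  moreover have "(\<Sum>i\<in>{2 * k..<2 * k + p}. block_sign_vec k p $ i * block_sign_vec k p $ i) = 0"
    by (intro sum.neutral) (auto simp: index_block_sign_vec)
  ultimately show ?thesis by (simp add: sum_split_blocks index_block_sign_vec)
qed

lemma block_sign_vec_nonzero: "0 < k \<Longrightarrow> block_sign_vec k p \<noteq> 0\<^sub>v (2 * k + p)"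
  using block_sign_vec_inner_self[of k p] by auto

lemma left_vec_eq: "left_vec k p = (- 1 / sqrt (2 * real k)) \<cdot>\<^sub>v block_sign_vec k p"
  by (intro eq_vecI) (auto simp: left_vec_def index_block_sign_vec blk_def)

lemma right_vec_eq: "right_vec k q = (1 / sqrt (2 * real k)) \<cdot>\<^sub>v block_sign_vec k q"
  by (intro eq_vecI) (auto simp: right_vec_def index_block_sign_vec blk_def)

lemma dim_E_mat[simp]:
  "dim_row (E_mat k1 k2 p q) = 2 * k1 + p" "dim_col (E_mat k1 k2 p q) = 2 * k2 + q"
  unfolding E_mat_def by simp_all

lemma E_mat_eq_outer_prod_mat: "E_mat k1 k2 p q = outer_prod_mat (block_sign_vec k1 p) (block_sign_vec k2 q)"
  by (intro eq_matI) (auto simp: E_mat_def index_block_sign_vec blk_def)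

lemma compatible_form_transpose: "compatible_form k1 k2 A \<Longrightarrow> compatible_form k2 k1 (transpose_mat A)"
  unfolding compatible_form_def by auto

lemma compatible_mult_block_sign_vec:
  assumes A: "A \<in> carrier_mat (2 * k1 + p) (2 * k2 + q)" and cf: "compatible_form k1 k2 A"
    and i: "i < 2 * k1 + p"
  shows "(A *\<^sub>v block_sign_vec k2 q) $ i = (if blk k1 i < 2 then - real k2 * block_sign_vec k1 p $ i
    else (\<Sum>j<k2. A $$ (i, j)) - (\<Sum>j\<in>{k2..<2 * k2}. A $$ (i, j)))"
proof -
  let ?z = "block_sign_vec k2 q"
  have "(\<Sum>j<k2. A $$ (i, j) * ?z $ j) = (\<Sum>j<k2. A $$ (i, j))"
    by (intro sum.cong) (auto simp: index_block_sign_vec)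
  moreover have "(\<Sum>j\<in>{k2..<2 * k2}. A $$ (i, j) * ?z $ j) = - (\<Sum>j\<in>{k2..<2 * k2}. A $$ (i, j))"
    by (subst sum_negf[symmetric], intro sum.cong) (auto simp: index_block_sign_vec)
  moreover have "(\<Sum>j\<in>{2 * k2..<2 * k2 + q}. A $$ (i, j) * ?z $ j) = 0"
    by (intro sum.neutral) (auto simp: index_block_sign_vec)
  ultimately have Az: "(A *\<^sub>v ?z) $ i = (\<Sum>j<k2. A $$ (i, j)) - (\<Sum>j\<in>{k2..<2 * k2}. A $$ (i, j))"
    using A i by (subst index_mult_mat_vec_sum) (simp_all add: sum_split_blocks[of _ k2 q])
  show ?thesis
  proof (cases "blk k1 i < 2")
    case True
    then have "A $$ (i, j) = (if blk k1 i = blk k2 j then 0 else 1)" if "j < 2 * k2" for j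
      using cf A i that unfolding compatible_form_def by (auto simp: blk_def)
    then have "(\<Sum>j<k2. A $$ (i, j)) = (\<Sum>j<k2. if blk k1 i = 0 then 0 else 1)"
      and "(\<Sum>j\<in>{k2..<2 * k2}. A $$ (i, j)) = (\<Sum>j\<in>{k2..<2 * k2}. if blk k1 i = 1 then 0 else 1)"
      by (auto intro!: sum.cong simp: blk_def)
    then show ?thesis
      using Az True i by (auto simp: index_block_sign_vec blk_def)
  qed (use Az in simp)
qed

lemma compatible_mult_block_sign_vec_iff:
  assumes A: "A \<in> carrier_mat (2 * k1 + p) (2 * k2 + q)" and cf: "compatible_form k1 k2 A"
  shows "A *\<^sub>v block_sign_vec k2 q = (- real k2) \<cdot>\<^sub>v block_sign_vec k1 p \<longleftrightarrow>
    (\<forall>i<2 * k1 + p. blk k1 i = 2 \<longrightarrow> (\<Sum>j<k2. A $$ (i, j)) = (\<Sum>j\<in>{k2..<2 * k2}. A $$ (i, j)))"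
  using A compatible_mult_block_sign_vec[OF A cf]
  by (auto simp: vec_eq_iff index_block_sign_vec blk_def split: if_splits)

lemma zero_one_mat_add_E_mat:
  assumes A: "A \<in> carrier_mat (2 * k1 + p) (2 * k2 + q)" and zo: "zero_one_mat A"
    and cf: "compatible_form k1 k2 A"
  shows "zero_one_mat (A + E_mat k1 k2 p q)"
  unfolding zero_one_mat_def
proof (intro allI impI)
  fix i j assume "i < dim_row (A + E_mat k1 k2 p q)" "j < dim_col (A + E_mat k1 k2 p q)"
  then have ij: "i < 2 * k1 + p" "j < 2 * k2 + q" by simp_all
  show "(A + E_mat k1 k2 p q) $$ (i, j) = 0 \<or> (A + E_mat k1 k2 p q) $$ (i, j) = 1"
  proof (cases "blk k1 i < 2 \<and> blk k2 j < 2")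
    case True
    then have "A $$ (i, j) = (if blk k1 i = blk k2 j then 0 else 1)"
      using cf A ij unfolding compatible_form_def by auto
    then show ?thesis using A ij True by (auto simp: E_mat_def)
  next
    case False
    then show ?thesis using zo A ij unfolding zero_one_mat_def by (auto simp: E_mat_def blk_def)
  qed
qed

lemma gram_mates_add_E_mat_iff:
  assumes k1: "0 < k1" and k2: "0 < k2" and A: "A \<in> carrier_mat (2 * k1 + p) (2 * k2 + q)"
    and zo: "zero_one_mat A" and cf: "compatible_form k1 k2 A"
  shows "gram_mates A (A + E_mat k1 k2 p q) \<longleftrightarrow> sum_condition k1 k2 A"
proof -
  define w z where "w = block_sign_vec k1 p" and "z = block_sign_vec k2 q"
  have w: "w \<in> carrier_vec (2 * k1 + p)" "(- 1) \<cdot>\<^sub>v w \<noteq> 0\<^sub>v (2 * k1 + p)" "w \<bullet> w = 2 * real k1"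
    and z: "z \<in> carrier_vec (2 * k2 + q)" "z \<noteq> 0\<^sub>v (2 * k2 + q)" "z \<bullet> z = 2 * real k2"
    using block_sign_vec_nonzero[OF k1, of p] block_sign_vec_nonzero[OF k2, of q]
    unfolding w_def z_def by (auto simp: block_sign_vec_inner_self vec_eq_iff)
  have E: "A + E_mat k1 k2 p q = A - outer_prod_mat ((- 1) \<cdot>\<^sub>v w) z"
    using A unfolding E_mat_eq_outer_prod_mat w_def z_def by (intro eq_matI) auto
  have "E_mat k1 k2 p q $$ (0, 0) = 1" using k1 k2 by (simp add: E_mat_def blk_def)
  then have "A \<noteq> A + E_mat k1 k2 p q"
    using A k1 k2 by (auto dest!: arg_cong[where f = "\<lambda>X. X $$ (0, 0)"])
  then have "gram_mates A (A + E_mat k1 k2 p q) \<longleftrightarrow>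
      (A - outer_prod_mat ((- 1) \<cdot>\<^sub>v w) z) * transpose_mat (A - outer_prod_mat ((- 1) \<cdot>\<^sub>v w) z)
        = A * transpose_mat A \<and>
      transpose_mat (A - outer_prod_mat ((- 1) \<cdot>\<^sub>v w) z) * (A - outer_prod_mat ((- 1) \<cdot>\<^sub>v w) z)
        = transpose_mat A * A"
    using A zo zero_one_mat_add_E_mat[OF A zo cf] unfolding gram_mates_def E
    by (auto simp: w_def z_def)
  also have "\<dots> \<longleftrightarrow> A *\<^sub>v z = (- real k2) \<cdot>\<^sub>v w \<and> transpose_mat A *\<^sub>v w = (- real k1) \<cdot>\<^sub>v z"
    using gram_rank_one_update_iff[OF A _ w(2) z(1)] gram_transpose_rank_one_update_iff[OF A _ z(1,2)] A w z
    by (auto simp: mult_mat_vec[of _ "2 * k2 + q"] smult_smult_assoc vec_eq_iff)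
  also have "\<dots> \<longleftrightarrow> sum_condition k1 k2 A"
  proof -
    have At: "transpose_mat A \<in> carrier_mat (2 * k2 + q) (2 * k1 + p)" using A by simp
    have "(\<Sum>i<k1. transpose_mat A $$ (j, i)) = (\<Sum>i<k1. A $$ (i, j))"
      "(\<Sum>i\<in>{k1..<2 * k1}. transpose_mat A $$ (j, i)) = (\<Sum>i\<in>{k1..<2 * k1}. A $$ (i, j))"
      if "j < 2 * k2 + q" for j
      using A that by (auto intro!: sum.cong)
    then show ?thesis
      using compatible_mult_block_sign_vec_iff[OF A cf] A
        compatible_mult_block_sign_vec_iff[OF At compatible_form_transpose[OF cf]]
      unfolding sum_condition_def w_def z_def by auto
  qed
  finally show ?thesis .
qed

lemma realizable_E_mat:
  assumes k1: "0 < k1" and k2: "0 < k2"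
  shows "realizable (E_mat k1 k2 p q)"
proof -
  define A :: "real mat" where "A = mat (2 * k1 + p) (2 * k2 + q)
    (\<lambda>(i, j). if blk k1 i < 2 \<and> blk k2 j < 2 \<and> blk k1 i \<noteq> blk k2 j then 1 else 0)"
  have A: "A \<in> carrier_mat (2 * k1 + p) (2 * k2 + q)" unfolding A_def by simp
  have "zero_one_mat A" "compatible_form k1 k2 A"
    unfolding zero_one_mat_def compatible_form_def A_def by auto
  moreover have "sum_condition k1 k2 A"
    unfolding sum_condition_def
    by (intro conjI allI impI; subst (1 2) sum.neutral) (auto simp: A_def blk_def)
  ultimately have "gram_mates A (A + E_mat k1 k2 p q)"
    using gram_mates_add_E_mat_iff[OF k1 k2 A] by blast
  moreover have "zero_one_neg_mat (E_mat k1 k2 p q)"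
    unfolding zero_one_neg_mat_def E_mat_def by auto
  moreover have "(\<Sum>j<2 * k2 + q. E_mat k1 k2 p q $$ (i, j)) = 0" if "i < 2 * k1 + p" for i
    using that sum_block_sign_vec[of k2 q]
    by (simp add: E_mat_eq_outer_prod_mat sum_distrib_left[symmetric])
  moreover have "(\<Sum>i<2 * k1 + p. E_mat k1 k2 p q $$ (i, j)) = 0" if "j < 2 * k2 + q" for j
    using that sum_block_sign_vec[of k1 p]
    by (simp add: E_mat_eq_outer_prod_mat sum_distrib_right[symmetric])
  ultimately show ?thesis
    using A unfolding realizable_def by auto
qed

lemma gram_mates_via_E_mat_diff:
  assumes "gram_mates_via (E_mat k1 k2 p q) A B"
  obtains \<sigma> :: real where "\<sigma> = 1 \<or> \<sigma> = -1" and "A \<in> carrier_mat (2 * k1 + p) (2 * k2 + q)"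
    and "A - B = outer_prod_mat (\<sigma> \<cdot>\<^sub>v block_sign_vec k1 p) (block_sign_vec k2 q)"
proof -
  have diff: "A - B = E_mat k1 k2 p q \<or> A - B = - E_mat k1 k2 p q" and gm: "gram_mates A B"
    using assms unfolding gram_mates_via_def by auto
  then have "dim_row B = 2 * k1 + p" "dim_col B = 2 * k2 + q"
    by (metis dim_E_mat index_minus_mat(2,3) index_uminus_mat(2,3))+
  then have A: "A \<in> carrier_mat (2 * k1 + p) (2 * k2 + q)"
    using gm unfolding gram_mates_def by simp
  from diff show ?thesis
  proof
    assume "A - B = E_mat k1 k2 p q"
    then show ?thesis using that[of 1] A by (simp add: E_mat_eq_outer_prod_mat)
  next
    assume "A - B = - E_mat k1 k2 p q"
    moreover have "- E_mat k1 k2 p q = outer_prod_mat ((- 1) \<cdot>\<^sub>v block_sign_vec k1 p) (block_sign_vec k2 q)"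
      by (intro eq_matI) (auto simp: E_mat_eq_outer_prod_mat)
    ultimately show ?thesis using that[of "-1"] A by simp
  qed
qed

lemma gram_mates_via_E_mat_convertible:
  assumes k1: "0 < k1" and k2: "0 < k2" and via: "gram_mates_via (E_mat k1 k2 p q) A B"
  shows "convertible A B"
proof -
  obtain \<sigma> :: real where \<sigma>: "\<sigma> = 1 \<or> \<sigma> = -1" and A: "A \<in> carrier_mat (2 * k1 + p) (2 * k2 + q)"
    and diff: "A - B = outer_prod_mat (\<sigma> \<cdot>\<^sub>v block_sign_vec k1 p) (block_sign_vec k2 q)"
    using gram_mates_via_E_mat_diff[OF via] by blast
  have "\<sigma> \<cdot>\<^sub>v block_sign_vec k1 p \<noteq> 0\<^sub>v (2 * k1 + p)"
    using \<sigma> block_sign_vec_nonzero[OF k1, of p] by (auto simp: vec_eq_iff)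
  then show ?thesis
    using gram_mates_rank_one_conversion[OF _ A _ _ _ block_sign_vec_nonzero[OF k2] diff] via \<sigma>
    unfolding convertible_def gram_mates_via_def by auto
qed

lemma gram_mates_via_E_mat_conversion:
  assumes k1: "0 < k1" and k2: "0 < k2" and via: "gram_mates_via (E_mat k1 k2 p q) A B"
    and conv: "conversion A B U S V K"
  shows "\<exists>i. K = {i} \<and> S $$ (i, i) = sqrt (real (k1 * k2)) \<and>
    (col U i = left_vec k1 p \<or> col U i = - left_vec k1 p) \<and>
    (col V i = right_vec k2 q \<or> col V i = - right_vec k2 q)"
proof -
  obtain \<sigma> :: real where \<sigma>: "\<sigma> = 1 \<or> \<sigma> = -1" and A: "A \<in> carrier_mat (2 * k1 + p) (2 * k2 + q)"
    and diff: "A - B = outer_prod_mat (\<sigma> \<cdot>\<^sub>v block_sign_vec k1 p) (block_sign_vec k2 q)"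
    using gram_mates_via_E_mat_diff[OF via] by blast
  have norms: "(\<sigma> \<cdot>\<^sub>v block_sign_vec k1 p) \<bullet> (\<sigma> \<cdot>\<^sub>v block_sign_vec k1 p) = 2 * real k1"
    "block_sign_vec k2 q \<bullet> block_sign_vec k2 q = 2 * real k2"
    using \<sigma> by (auto simp: block_sign_vec_inner_self)
  obtain i where Ki: "K = {i}" and S_i: "2 * S $$ (i, i) = sqrt (2 * real k1) * sqrt (2 * real k2)"
    and U_i: "col U i = (1 / sqrt (2 * real k1)) \<cdot>\<^sub>v (\<sigma> \<cdot>\<^sub>v block_sign_vec k1 p) \<or>
      col U i = (- 1 / sqrt (2 * real k1)) \<cdot>\<^sub>v (\<sigma> \<cdot>\<^sub>v block_sign_vec k1 p)"
    and V_i: "col V i = (1 / sqrt (2 * real k2)) \<cdot>\<^sub>v block_sign_vec k2 q \<or>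
      col V i = (- 1 / sqrt (2 * real k2)) \<cdot>\<^sub>v block_sign_vec k2 q"
    using conversion_rank_one_diff[OF conv diff] A unfolding norms by auto
  have "sqrt (2 * real k1) * sqrt (2 * real k2) = sqrt (2\<^sup>2 * (real k1 * real k2))"
    by (simp add: real_sqrt_mult[symmetric] power2_eq_square mult_ac)
  also have "\<dots> = 2 * sqrt (real (k1 * k2))"
    by (simp add: real_sqrt_mult)
  finally have "S $$ (i, i) = sqrt (real (k1 * k2))" using S_i by simp
  moreover have "col U i = left_vec k1 p \<or> col U i = - left_vec k1 p"
    unfolding left_vec_eq uminus_smult_vec using U_i \<sigma> by (auto simp: smult_smult_assoc)
  moreover have "col V i = right_vec k2 q \<or> col V i = - right_vec k2 q"
    unfolding right_vec_eq uminus_smult_vec using V_i by auto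
  ultimately show ?thesis using Ki by blast
qed

theorem theorem4p7:
  fixes k1 k2 p q :: nat
  assumes "k1 > 0" and "k2 > 0"
  defines "E \<equiv> E_mat k1 k2 p q"
  shows
    "(\<forall>A \<in> carrier_mat (2 * k1 + p) (2 * k2 + q).
        zero_one_mat A \<and> compatible_form k1 k2 A \<longrightarrow>
        (gram_mates A (A + E) \<longleftrightarrow> sum_condition k1 k2 A))
   \<and> realizable E
   \<and> (\<forall>A B. gram_mates_via E A B \<longrightarrow> convertible A B \<and> convertible B A)
   \<and> (\<forall>A B U S V K. gram_mates_via E A B \<and> conversion A B U S V K \<longrightarrow>
        (\<exists>i. K = {i} \<and> S $$ (i,i) = sqrt (real (k1 * k2)) \<and>
             (col U i = left_vec k1 p \<or> col U i = - left_vec k1 p) \<and>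
             (col V i = right_vec k2 q \<or> col V i = - right_vec k2 q)))"
  unfolding E_def
proof (intro conjI allI ballI impI)
  fix A assume "A \<in> carrier_mat (2 * k1 + p) (2 * k2 + q)" "zero_one_mat A \<and> compatible_form k1 k2 A"
  then show "gram_mates A (A + E_mat k1 k2 p q) \<longleftrightarrow> sum_condition k1 k2 A"
    using gram_mates_add_E_mat_iff[OF assms(1,2)] by blast
next
  show "realizable (E_mat k1 k2 p q)" by (rule realizable_E_mat[OF assms(1,2)])
next
  fix A B assume via: "gram_mates_via (E_mat k1 k2 p q) A B"
  show "convertible A B" by (rule gram_mates_via_E_mat_convertible[OF assms(1,2) via])
  show "convertible B A" by (rule gram_mates_via_E_mat_convertible[OF assms(1,2) gram_mates_via_sym[OF via]])
next
  fix A B U S V K assume "gram_mates_via (E_mat k1 k2 p q) A B \<and> conversion A B U S V K"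
  then show "\<exists>i. K = {i} \<and> S $$ (i, i) = sqrt (real (k1 * k2)) \<and>
      (col U i = left_vec k1 p \<or> col U i = - left_vec k1 p) \<and>
      (col V i = right_vec k2 q \<or> col V i = - right_vec k2 q)"
    using gram_mates_via_E_mat_conversion[OF assms(1,2)] by blast
qed

end
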